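(* Let $\mathfrak k$ be a Lie algebra over a field $\mathbb K$ with $2\in\mathbb K^\times$. The maps $\alpha_2,\beta_1,\gamma,\alpha_3,\beta_2$ described below are well-defined linear maps and the sequence $$\{0\}\to H^2(\mathfrak k)\xrightarrow{\alpha_2}H^1(\mathfrak k,\mathfrak k^* )\xrightarrow{\beta_1}\mathrm{Sym}^2(\mathfrak k)^{\mathfrak k}\xrightarrow{\gamma}H^3(\mathfrak k)\xrightarrow{\alpha_3}H^2(\mathfrak k,\mathfrak k^* )\xrightarrow{\beta_2}H^1(\mathfrak k,\mathrm{Sym}^2(\mathfrak k))$$ is exact.
   Context: $H^p(\mathfrak k,\mathfrak a)$ denotes Chevalley–Eilenberg cohomology with coefficients in a $\mathfrak k$-module $\mathfrak a$, and $H^p(\mathfrak k)=H^p(\mathfrak k,\mathbb K)$ with trivial module. $\mathfrak k^*$ is the coadjoint module: $(x.\lambda)(y)=-\lambda([x,y])$. $\mathrm{Sym}^2(\mathfrak k)$ is the space of symmetric bilinear forms on $\mathfrak k$ with $(x.\kappa)(y,z)=-\kappa([x,y],z)-\kappa(y,[x,z])$; $\mathrm{Sym}^2(\mathfrak k)^{\mathfrak k}$ is the space of invariant ones. Definitions: $\alpha_p([\omega])=[\tilde\alpha_p\omega]$ with $(\tilde\alpha_p\omega)(x_1,\dots,x_{p-1})(y)=\omega(x_1,\dots,x_{p-1},y)$. With $S:C^1(\mathfrak k,\mathfrak k^* )\to\mathrm{Sym}^2(\mathfrak k)$, $S(\eta)(y,z)=\eta(y)(z)+\eta(z)(y)$: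 $\beta_1([\omega])=S(\omega)$ for $\omega\in Z^1(\mathfrak k,\mathfrak k^* )$, and $\beta_2([\omega])=[x\mapsto S(\omega(x,\cdot))]$ for $\omega\in Z^2(\mathfrak k,\mathfrak k^* )$. $\gamma(\kappa)=[\Gamma(\kappa)]$ with $\Gamma(\kappa)(x,y,z)=\kappa([x,y],z)$. *)

theory Defs
  imports Main "HOL.Vector_Spaces" "HOL-Library.Function_Algebras"
begin

definition lie_algebra :: "('k::field \<Rightarrow> 'v::ab_group_add \<Rightarrow> 'v) \<Rightarrow> ('v \<Rightarrow> 'v \<Rightarrow> 'v) \<Rightarrow> bool" where
  "lie_algebra sV br \<longleftrightarrow> Vector_Spaces.vector_space sV
     \<and> (\<forall>x. Vector_Spaces.linear sV sV (br x)) \<and> (\<forall>y. Vector_Spaces.linear sV sV (\<lambda>x. br x y))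
     \<and> (\<forall>x. br x x = 0)
     \<and> (\<forall>x y z. br x (br y z) + br y (br z x) + br z (br x y) = 0)"

text \<open>A p-cochain with values in a module (ambient type 'm, scalar multiplication sM,
  carrier A) is an alternating p-multilinear map, encoded as a function on argument lists
  which vanishes on lists of length different from p.\<close>

definition cochains :: "('k::field \<Rightarrow> 'v::ab_group_add \<Rightarrow> 'v) \<Rightarrow> ('k \<Rightarrow> 'm \<Rightarrow> 'm) \<Rightarrow> 'm::ab_group_add set
    \<Rightarrow> nat \<Rightarrow> ('v list \<Rightarrow> 'm) set" where
  "cochains sV sM A p = {\<omega>.
      (\<forall>xs. length xs \<noteq> p \<longrightarrow> \<omega> xs = 0)
    \<and> (\<forall>xs. length xs = p \<longrightarrow> \<omega> xs \<in> A)
    \<and> (\<forall>xs i. length xs = p \<and> i < p \<longrightarrow> Vector_Spaces.linear sV sM (\<lambda>y. \<omega> (xs[i := y])))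
    \<and> (\<forall>xs i j. length xs = p \<and> i < j \<and> j < p \<and> xs ! i = xs ! j \<longrightarrow> \<omega> xs = 0)}"

definition del_nth :: "nat \<Rightarrow> 'a list \<Rightarrow> 'a list" where
  "del_nth i xs = take i xs @ drop (Suc i) xs"

definition ce_diff :: "('v \<Rightarrow> 'v \<Rightarrow> 'v) \<Rightarrow> ('k::field \<Rightarrow> 'm \<Rightarrow> 'm) \<Rightarrow> ('v \<Rightarrow> 'm \<Rightarrow> 'm)
    \<Rightarrow> nat \<Rightarrow> ('v list \<Rightarrow> 'm::ab_group_add) \<Rightarrow> 'v list \<Rightarrow> 'm" where
  "ce_diff br sM act p \<omega> xs =
     (if length xs = Suc p then
        (\<Sum>i<Suc p. sM ((-1) ^ i) (act (xs ! i) (\<omega> (del_nth i xs))))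
      + (\<Sum>j<Suc p. \<Sum>i<j. sM ((-1) ^ (i + j))
            (\<omega> (br (xs ! i) (xs ! j) # del_nth i (del_nth j xs))))
      else 0)"

definition cocycles where
  "cocycles sV br sM act A p = {\<omega> \<in> cochains sV sM A p. ce_diff br sM act p \<omega> = 0}"

definition coboundaries where
  "coboundaries sV br sM act A p =
     (if p = 0 then {0} else ce_diff br sM act (p - 1) ` cochains sV sM A (p - 1))"

definition cscale :: "('k \<Rightarrow> 'm \<Rightarrow> 'm) \<Rightarrow> 'k \<Rightarrow> ('v list \<Rightarrow> 'm) \<Rightarrow> 'v list \<Rightarrow> 'm" where
  "cscale sM a \<omega> = (\<lambda>xs. sM a (\<omega> xs))"

definition coset :: "'a::ab_group_add set \<Rightarrow> 'a \<Rightarrow> 'a set" where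
  "coset B x = (\<lambda>b. x + b) ` B"

definition cohomology where
  "cohomology sV br sM act A p =
     coset (coboundaries sV br sM act A p) ` cocycles sV br sM act A p"

definition qmap :: "('a \<Rightarrow> 'b::ab_group_add) \<Rightarrow> 'b set \<Rightarrow> 'a set \<Rightarrow> 'b set" where
  "qmap F B' c = (\<Union>x\<in>c. coset B' (F x))"

definition qadd :: "'a::ab_group_add set \<Rightarrow> 'a set \<Rightarrow> 'a set" where
  "qadd c d = {x + y | x y. x \<in> c \<and> y \<in> d}"

definition qscale :: "('k \<Rightarrow> 'a::ab_group_add \<Rightarrow> 'a) \<Rightarrow> 'a set \<Rightarrow> 'k \<Rightarrow> 'a set \<Rightarrow> 'a set" where
  "qscale s B a c = {s a x + b | x b. x \<in> c \<and> b \<in> B}"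

definition well_defined_linear where
  "well_defined_linear s B H s' B' H' F \<longleftrightarrow>
     (\<forall>c\<in>H. qmap F B' c \<in> H')
   \<and> (\<forall>c\<in>H. \<forall>d\<in>H. qmap F B' (qadd c d) = qadd (qmap F B' c) (qmap F B' d))
   \<and> (\<forall>a. \<forall>c\<in>H. qmap F B' (qscale s B a c) = qscale s' B' a (qmap F B' c))"

definition exact_at where
  "exact_at H1 F B2 H2 G B3 \<longleftrightarrow>
     qmap F B2 ` H1 = {c \<in> H2. qmap G B3 c = coset B3 0}"

definition triv_act :: "'v \<Rightarrow> 'k::field \<Rightarrow> 'k" where
  "triv_act x c = 0"

definition dual_scale :: "'k::field \<Rightarrow> ('v \<Rightarrow> 'k) \<Rightarrow> 'v \<Rightarrow> 'k" where
  "dual_scale a f = (\<lambda>y. a * f y)"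

definition dual_space :: "('k::field \<Rightarrow> 'v::ab_group_add \<Rightarrow> 'v) \<Rightarrow> ('v \<Rightarrow> 'k) set" where
  "dual_space sV = {f. Vector_Spaces.linear sV (*) f}"

definition dual_act :: "('v \<Rightarrow> 'v \<Rightarrow> 'v) \<Rightarrow> 'v \<Rightarrow> ('v \<Rightarrow> 'k::field) \<Rightarrow> 'v \<Rightarrow> 'k" where
  "dual_act br x f = (\<lambda>y. - f (br x y))"

definition sym_scale :: "'k::field \<Rightarrow> ('v \<Rightarrow> 'v \<Rightarrow> 'k) \<Rightarrow> 'v \<Rightarrow> 'v \<Rightarrow> 'k" where
  "sym_scale a f = (\<lambda>y z. a * f y z)"

definition sym2 :: "('k::field \<Rightarrow> 'v::ab_group_add \<Rightarrow> 'v) \<Rightarrow> ('v \<Rightarrow> 'v \<Rightarrow> 'k) set" where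
  "sym2 sV = {\<kappa>. (\<forall>y. Vector_Spaces.linear sV (*) (\<kappa> y)) \<and> (\<forall>z. Vector_Spaces.linear sV (*) (\<lambda>y. \<kappa> y z))
                \<and> (\<forall>y z. \<kappa> y z = \<kappa> z y)}"

definition sym_act :: "('v \<Rightarrow> 'v \<Rightarrow> 'v) \<Rightarrow> 'v \<Rightarrow> ('v \<Rightarrow> 'v \<Rightarrow> 'k::field) \<Rightarrow> 'v \<Rightarrow> 'v \<Rightarrow> 'k" where
  "sym_act br x \<kappa> = (\<lambda>y z. - \<kappa> (br x y) z - \<kappa> y (br x z))"

definition sym2_inv :: "('k::field \<Rightarrow> 'v::ab_group_add \<Rightarrow> 'v) \<Rightarrow> ('v \<Rightarrow> 'v \<Rightarrow> 'v) \<Rightarrow> ('v \<Rightarrow> 'v \<Rightarrow> 'k) set" where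
  "sym2_inv sV br = {\<kappa> \<in> sym2 sV. \<forall>x. sym_act br x \<kappa> = 0}"

definition alpha_til :: "nat \<Rightarrow> ('v list \<Rightarrow> 'k::field) \<Rightarrow> 'v list \<Rightarrow> 'v \<Rightarrow> 'k" where
  "alpha_til p \<omega> xs = (if length xs = p - 1 then (\<lambda>y. \<omega> (xs @ [y])) else 0)"

definition S_map :: "('v list \<Rightarrow> 'v \<Rightarrow> 'k::field) \<Rightarrow> 'v \<Rightarrow> 'v \<Rightarrow> 'k" where
  "S_map \<eta> = (\<lambda>y z. \<eta> [y] z + \<eta> [z] y)"

text \<open>beta~_2 \<omega> = (x \<mapsto> S(\<omega>(x,.))).\<close>
definition beta2_til :: "('v list \<Rightarrow> 'v \<Rightarrow> 'k::field) \<Rightarrow> 'v list \<Rightarrow> 'v \<Rightarrow> 'v \<Rightarrow> 'k" where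
  "beta2_til \<omega> xs = (if length xs = 1 then (\<lambda>y z. \<omega> [xs ! 0, y] z + \<omega> [xs ! 0, z] y) else 0)"

definition Gamma :: "('v \<Rightarrow> 'v \<Rightarrow> 'v) \<Rightarrow> ('v \<Rightarrow> 'v \<Rightarrow> 'k::field) \<Rightarrow> 'v list \<Rightarrow> 'k" where
  "Gamma br \<kappa> xs = (if length xs = 3 then \<kappa> (br (xs ! 0) (xs ! 1)) (xs ! 2) else 0)"

abbreviation "Htriv sV br p \<equiv> cohomology sV br (*) triv_act UNIV p"
abbreviation "Btriv sV br p \<equiv> coboundaries sV br (*) triv_act UNIV p"
abbreviation "Hdual sV br p \<equiv> cohomology sV br dual_scale (dual_act br) (dual_space sV) p"
abbreviation "Bdual sV br p \<equiv> coboundaries sV br dual_scale (dual_act br) (dual_space sV) p"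
abbreviation "Hsym sV br p \<equiv> cohomology sV br sym_scale (sym_act br) (sym2 sV) p"
abbreviation "Bsym sV br p \<equiv> coboundaries sV br sym_scale (sym_act br) (sym2 sV) p"
text \<open>Sym^2(k)^k viewed as a quotient by {0}: its elements are singletons.\<close>
abbreviation "Sinv sV br \<equiv> coset {0} ` sym2_inv sV br"

end

theory Submission
  imports Defs
begin

(* A p-cochain of k with values in k^* is a (p+1)-linear form alternating in its first p
   arguments, and alpha_p merely reads an alternating (p+1)-form in this way.  On alternating
   forms the two Chevalley-Eilenberg differentials agree, so alpha is a chain map.  For a bilinear
   form E on k, the part of dE symmetric in its last two arguments measures the failure of S(E) to
   be invariant, and for an invariant symmetric form kappa one has d kappa = Gamma(kappa); d o d = 0
   on C^1(k, k^* ) is the Jacobi identity.  As 2 is invertible, E = S(E)/2 + (E - E^T)/2, hence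
   dE = Gamma(S(E)/2) + d((E - E^T)/2) whenever S(E) is invariant.  Each exactness statement is a
   short consequence of these identities: for instance, if alpha_3(omega) = dE, then S(E) is
   invariant and omega - Gamma(S(E)/2) is the coboundary of (E - E^T)/2. *)

lemma self_neg_eq_0:
  fixes x :: "'k::field"
  assumes "(2::'k) \<noteq> 0" and "x = - x"
  shows "x = 0"
proof -
  have "2 * x = 0"
    using assms(2) by (metis add.right_inverse mult_2)
  then show ?thesis
    using assms(1) by simp
qed

lemma half_add_half: "(2::'k::field) \<noteq> 0 \<Longrightarrow> inverse 2 + inverse 2 = (1::'k)"
  by (metis mult_2 right_inverse)

section \<open>Cosets of subspaces\<close>

lemma mem_coset_iff: "x \<in> coset B u \<longleftrightarrow> x - u \<in> B"
  unfolding coset_def by (auto simp: image_iff intro: bexI[of _ "x - u"])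

context module
begin

lemma coset_eq_iff:
  assumes "subspace B"
  shows "coset B u = coset B v \<longleftrightarrow> u - v \<in> B"
proof
  assume "coset B u = coset B v"
  moreover have "u \<in> coset B u"
    using subspace_0[OF assms] by (simp add: mem_coset_iff)
  ultimately show "u - v \<in> B"
    by (simp add: mem_coset_iff)
next
  assume "u - v \<in> B"
  then have "x - u \<in> B \<longleftrightarrow> x - v \<in> B" for x
    using subspace_add[OF assms, of "x - u" "u - v"] subspace_diff[OF assms, of "x - v" "u - v"]
    by auto
  then show "coset B u = coset B v"
    by (auto simp: mem_coset_iff)
qed

lemma qadd_coset:
  assumes "subspace B"
  shows "qadd (coset B x) (coset B y) = coset B (x + y)"
proof (intro set_eqI iffI)
  fix u
  assume "u \<in> qadd (coset B x) (coset B y)"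
  then obtain a b where "u = a + b" "a - x \<in> B" "b - y \<in> B"
    by (auto simp: qadd_def mem_coset_iff)
  then show "u \<in> coset B (x + y)"
    using subspace_add[OF assms, of "a - x" "b - y"] by (simp add: mem_coset_iff algebra_simps)
next
  fix u
  assume "u \<in> coset B (x + y)"
  then have "u - y \<in> coset B x" "y \<in> coset B y"
    using subspace_0[OF assms] by (simp_all add: mem_coset_iff algebra_simps)
  then show "u \<in> qadd (coset B x) (coset B y)"
    unfolding qadd_def by force
qed

lemma qscale_coset:
  assumes "subspace B"
  shows "qscale scale B a (coset B x) = coset B (a *s x)"
proof (intro set_eqI iffI)
  fix u
  assume "u \<in> qscale scale B a (coset B x)"
  then obtain w b where "u = a *s w + b" "w - x \<in> B" "b \<in> B"
    by (auto simp: qscale_def mem_coset_iff)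
  then show "u \<in> coset B (a *s x)"
    using subspace_add[OF assms subspace_scale[OF assms, of "w - x" a], of b]
    by (simp add: mem_coset_iff algebra_simps)
next
  fix u
  assume "u \<in> coset B (a *s x)"
  moreover have "x \<in> coset B x"
    using subspace_0[OF assms] by (simp add: mem_coset_iff)
  ultimately show "u \<in> qscale scale B a (coset B x)"
    unfolding qscale_def by (force simp: mem_coset_iff)
qed

end

context module_hom
begin

lemma qmap_coset:
  assumes B: "m1.subspace B" and B': "m2.subspace B'" and fB: "f ` B \<subseteq> B'"
  shows "qmap f B' (coset B z) = coset B' (f z)"
proof -
  have "coset B' (f x) = coset B' (f z)" if "x \<in> coset B z" for x
    using that fB by (auto simp: m2.coset_eq_iff[OF B'] mem_coset_iff simp flip: diff)
  moreover have "z \<in> coset B z"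
    using m1.subspace_0[OF B] by (simp add: mem_coset_iff)
  ultimately show ?thesis
    unfolding qmap_def by blast
qed

lemma well_defined_linear_cosets:
  assumes B: "m1.subspace B" and B': "m2.subspace B'"
    and fB: "f ` B \<subseteq> B'" and fZ: "f ` Z \<subseteq> Z'"
  shows "well_defined_linear s1 B (coset B ` Z) s2 B' (coset B' ` Z') f"
  using fZ by (auto simp: well_defined_linear_def qmap_coset[OF B B' fB] m1.qadd_coset[OF B]
      m2.qadd_coset[OF B'] m1.qscale_coset[OF B] m2.qscale_coset[OF B'] add scale)

lemma kernel_cosets_trivial:
  assumes B: "m1.subspace B" and B': "m2.subspace B'" and fB: "f ` B \<subseteq> B'"
    and "0 \<in> Z" and ker: "\<And>z. z \<in> Z \<Longrightarrow> f z \<in> B' \<Longrightarrow> z \<in> B"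
  shows "{c \<in> coset B ` Z. qmap f B' c = coset B' 0} = {coset B 0}"
proof -
  have "coset B' (f z) = coset B' 0 \<longleftrightarrow> coset B z = coset B 0" if "z \<in> Z" for z
    using ker[OF that] fB by (auto simp: m1.coset_eq_iff[OF B] m2.coset_eq_iff[OF B'])
  then show ?thesis
    using \<open>0 \<in> Z\<close> by (auto simp: qmap_coset[OF B B' fB])
qed

end

lemma exact_at_cosets:
  assumes F: "module_hom s1 s2 F" and G: "module_hom s2 s3 G"
    and B1: "module.subspace s1 B1" and B2: "module.subspace s2 B2" and B3: "module.subspace s3 B3"
    and FB: "F ` B1 \<subseteq> B2" and GB: "G ` B2 \<subseteq> B3"
    and comp: "\<And>z. z \<in> Z1 \<Longrightarrow> F z \<in> Z2 \<and> G (F z) \<in> B3"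
    and ker: "\<And>w. w \<in> Z2 \<Longrightarrow> G w \<in> B3 \<Longrightarrow> \<exists>z\<in>Z1. w - F z \<in> B2"
  shows "exact_at (coset B1 ` Z1) F B2 (coset B2 ` Z2) G B3"
proof -
  interpret F: module_hom s1 s2 F by (fact F)
  interpret G: module_hom s2 s3 G by (fact G)
  have "qmap F B2 ` coset B1 ` Z1 = coset B2 ` F ` Z1"
    by (auto simp: F.qmap_coset[OF B1 B2 FB] image_image)
  also have "\<dots> = {c \<in> coset B2 ` Z2. qmap G B3 c = coset B3 0}"
  proof (intro set_eqI iffI)
    fix c assume "c \<in> coset B2 ` F ` Z1"
    then obtain z where "z \<in> Z1" "c = coset B2 (F z)" by blast
    moreover have "coset B3 (G (F z)) = coset B3 0"
      using comp[OF \<open>z \<in> Z1\<close>] G.m2.coset_eq_iff[OF B3] by simp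
    ultimately show "c \<in> {c \<in> coset B2 ` Z2. qmap G B3 c = coset B3 0}"
      using comp by (simp add: G.qmap_coset[OF B2 B3 GB])
  next
    fix c assume "c \<in> {c \<in> coset B2 ` Z2. qmap G B3 c = coset B3 0}"
    then obtain w where "w \<in> Z2" "G w \<in> B3" "c = coset B2 w"
      by (auto simp: G.qmap_coset[OF B2 B3 GB] G.m2.coset_eq_iff[OF B3])
    with ker obtain z where "z \<in> Z1" "c = coset B2 (F z)"
      by (metis F.m2.coset_eq_iff[OF B2])
    then show "c \<in> coset B2 ` F ` Z1" by blast
  qed
  finally show ?thesis
    unfolding exact_at_def .
qed

lemma vector_space_cscale:
  assumes "vector_space sM"
  shows "vector_space (cscale sM)"
  using assms by (simp add: vector_space_def cscale_def fun_eq_iff)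

definition coefficient_module ::
    "('k::field \<Rightarrow> 'm::ab_group_add \<Rightarrow> 'm) \<Rightarrow> ('v \<Rightarrow> 'm \<Rightarrow> 'm) \<Rightarrow> 'm set \<Rightarrow> bool"
  where "coefficient_module sM act A \<longleftrightarrow>
    vector_space sM \<and> (\<forall>x. Vector_Spaces.linear sM sM (act x)) \<and> module.subspace sM A"

lemma cochains_subspace:
  assumes "vector_space sV" and M: "coefficient_module sM act A"
  shows "module.subspace (cscale sM) (cochains sV sM A p)"
proof -
  interpret vector_space_pair sV sM
    using assms by (simp add: vector_space_pair_def coefficient_module_def)
  interpret C: vector_space "cscale sM"
    using vector_space_cscale vs2.vector_space_axioms .
  have A: "vs2.subspace A"
    using M by (simp add: coefficient_module_def)
  show ?thesis
  proof (rule C.subspaceI)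
    show "0 \<in> cochains sV sM A p"
      using vs2.subspace_0[OF A] by (simp add: cochains_def linear_zero)
  next
    fix \<omega> \<eta> assume "\<omega> \<in> cochains sV sM A p" "\<eta> \<in> cochains sV sM A p"
    then show "\<omega> + \<eta> \<in> cochains sV sM A p"
      using vs2.subspace_add[OF A] by (auto simp: cochains_def intro: linear_compose_add)
  next
    fix c \<omega> assume "\<omega> \<in> cochains sV sM A p"
    then show "cscale sM c \<omega> \<in> cochains sV sM A p"
      using vs2.subspace_scale[OF A]
      by (auto simp: cochains_def cscale_def intro: linear_compose_scale_right)
  qed
qed

lemma ce_diff_linear:
  assumes M: "coefficient_module sM act A"
  shows "Vector_Spaces.linear (cscale sM) (cscale sM) (ce_diff br sM act p)"
proof -
  interpret vector_space sM
    using M by (simp add: coefficient_module_def)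
  have act_add: "act x (u + v) = act x u + act x v" and act_scale: "act x (sM c u) = sM c (act x u)"
    for x u v c
    using M by (simp_all add: coefficient_module_def linear_iff)
  have "vector_space (cscale sM)"
    by (rule vector_space_cscale) unfold_locales
  then show ?thesis
    unfolding linear_iff
  proof (intro conjI allI)
    fix \<omega> \<eta>
    show "ce_diff br sM act p (\<omega> + \<eta>) = ce_diff br sM act p \<omega> + ce_diff br sM act p \<eta>"
      by (simp add: fun_eq_iff ce_diff_def act_add scale_right_distrib sum.distrib ac_simps)
  next
    fix c \<omega>
    show "ce_diff br sM act p (cscale sM c \<omega>) = cscale sM c (ce_diff br sM act p \<omega>)"
      by (simp add: fun_eq_iff ce_diff_def cscale_def act_scale scale_right_distrib scale_sum_right
          mult.commute del: sum.lessThan_Suc)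
  qed
qed

lemma coboundaries_subspace:
  fixes sV :: "'k::field \<Rightarrow> 'v::ab_group_add \<Rightarrow> 'v" and sM :: "'k \<Rightarrow> 'm::ab_group_add \<Rightarrow> 'm"
  assumes "vector_space sV" and M: "coefficient_module sM act A"
  shows "module.subspace (cscale sM) (coboundaries sV br sM act A p)"
proof (cases "p = 0")
  case True
  have "module (cscale sM :: 'k \<Rightarrow> ('v list \<Rightarrow> 'm) \<Rightarrow> _)"
    using M by (simp add: coefficient_module_def vector_space_cscale module_iff_vector_space)
  then show ?thesis
    using True by (simp add: coboundaries_def module.subspace_single_0)
next
  case False
  interpret d: linear "cscale sM" "cscale sM" "ce_diff br sM act (p - 1)"
    by (rule ce_diff_linear[OF M])
  show ?thesis
    using False d.subspace_image[OF cochains_subspace[OF assms]] by (simp add: coboundaries_def)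
qed

lemma zero_mem_cocycles:
  assumes "vector_space sV" and M: "coefficient_module sM act A"
  shows "0 \<in> cocycles sV br sM act A p"
proof -
  interpret d: linear "cscale sM" "cscale sM" "ce_diff br sM act p"
    by (rule ce_diff_linear[OF M])
  show ?thesis
    using d.vs1.subspace_0[OF cochains_subspace[OF assms]] by (simp add: cocycles_def)
qed

definition cochain0 :: "'m \<Rightarrow> 'v list \<Rightarrow> 'm::zero"
  where "cochain0 v xs = (if xs = [] then v else 0)"

definition cochain1 :: "('v \<Rightarrow> 'm) \<Rightarrow> 'v list \<Rightarrow> 'm::zero"
  where "cochain1 f xs = (if length xs = 1 then f (xs ! 0) else 0)"

definition cochain2 :: "('v \<Rightarrow> 'v \<Rightarrow> 'm) \<Rightarrow> 'v list \<Rightarrow> 'm::zero"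
  where "cochain2 f xs = (if length xs = 2 then f (xs ! 0) (xs ! 1) else 0)"

definition cochain3 :: "('v \<Rightarrow> 'v \<Rightarrow> 'v \<Rightarrow> 'm) \<Rightarrow> 'v list \<Rightarrow> 'm::zero"
  where "cochain3 f xs = (if length xs = 3 then f (xs ! 0) (xs ! 1) (xs ! 2) else 0)"

definition cochain4 :: "('v \<Rightarrow> 'v \<Rightarrow> 'v \<Rightarrow> 'v \<Rightarrow> 'm) \<Rightarrow> 'v list \<Rightarrow> 'm::zero"
  where "cochain4 f xs = (if length xs = 4 then f (xs ! 0) (xs ! 1) (xs ! 2) (xs ! 3) else 0)"

lemma cochain_apply [simp]:
  "cochain0 v [] = v"
  "cochain1 f [a] = f a"
  "cochain2 g [a, b] = g a b"
  "cochain3 h [a, b, c] = h a b c"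
  "cochain4 k [a, b, c, d] = k a b c d"
  by (simp_all add: cochain0_def cochain1_def cochain2_def cochain3_def cochain4_def)

lemma length_eq_numeral_iff:
  "length xs = 1 \<longleftrightarrow> (\<exists>a. xs = [a])"
  "length xs = 2 \<longleftrightarrow> (\<exists>a b. xs = [a, b])"
  "length xs = 3 \<longleftrightarrow> (\<exists>a b c. xs = [a, b, c])"
  "length xs = 4 \<longleftrightarrow> (\<exists>a b c d. xs = [a, b, c, d])"
  by (auto simp: length_Suc_conv eval_nat_numeral)

lemma less_numeral_nat_iff:
  "(i::nat) < 2 \<longleftrightarrow> i = 0 \<or> i = 1"
  "(i::nat) < 3 \<longleftrightarrow> i = 0 \<or> i = 1 \<or> i = 2"
  by auto

lemma eq_cochainI:
  "(\<And>xs. xs \<noteq> [] \<Longrightarrow> \<omega> xs = 0) \<Longrightarrow> \<omega> [] = v \<Longrightarrow> \<omega> = cochain0 v"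
  "(\<And>xs. length xs \<noteq> 1 \<Longrightarrow> \<omega> xs = 0) \<Longrightarrow> (\<And>a. \<omega> [a] = f a) \<Longrightarrow> \<omega> = cochain1 f"
  "(\<And>xs. length xs \<noteq> 2 \<Longrightarrow> \<omega> xs = 0) \<Longrightarrow> (\<And>a b. \<omega> [a, b] = g a b) \<Longrightarrow> \<omega> = cochain2 g"
  "(\<And>xs. length xs \<noteq> 3 \<Longrightarrow> \<omega> xs = 0) \<Longrightarrow> (\<And>a b c. \<omega> [a, b, c] = h a b c)
    \<Longrightarrow> \<omega> = cochain3 h"
  "(\<And>xs. length xs \<noteq> 4 \<Longrightarrow> \<omega> xs = 0) \<Longrightarrow> (\<And>a b c d. \<omega> [a, b, c, d] = k a b c d)
    \<Longrightarrow> \<omega> = cochain4 k"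
  by (auto simp: fun_eq_iff cochain0_def cochain1_def cochain2_def cochain3_def cochain4_def
      length_eq_numeral_iff length_Suc_conv)

lemma cochain_eq_iff:
  "cochain1 f = cochain1 f' \<longleftrightarrow> f = f'"
  "cochain2 g = cochain2 g' \<longleftrightarrow> g = g'"
  "cochain3 h = cochain3 h' \<longleftrightarrow> h = h'"
  "cochain4 k = cochain4 k' \<longleftrightarrow> k = k'"
  by (metis cochain_apply ext)+

lemma cochain_zero:
  "cochain1 0 = 0" "cochain2 0 = 0" "cochain3 0 = 0" "cochain4 0 = 0"
  by (simp_all add: fun_eq_iff cochain1_def cochain2_def cochain3_def cochain4_def)

lemma cochain_eq_0_iff:
  "cochain1 f = 0 \<longleftrightarrow> f = 0" "cochain2 g = 0 \<longleftrightarrow> g = 0"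
  "cochain3 h = 0 \<longleftrightarrow> h = 0" "cochain4 k = 0 \<longleftrightarrow> k = 0"
  using cochain_eq_iff(1)[of f 0] cochain_eq_iff(2)[of g 0] cochain_eq_iff(3)[of h 0]
    cochain_eq_iff(4)[of k 0]
  by (simp_all add: cochain_zero)

lemma cochain_diff:
  fixes g g' :: "'v \<Rightarrow> 'v \<Rightarrow> 'm::ab_group_add" and h h' :: "'v \<Rightarrow> 'v \<Rightarrow> 'v \<Rightarrow> 'm"
  shows "cochain2 g - cochain2 g' = cochain2 (g - g')"
  "cochain3 h - cochain3 h' = cochain3 (h - h')"
  by (simp_all add: fun_eq_iff cochain2_def cochain3_def)

lemma ce_diff_length:
  "length xs \<noteq> Suc p \<Longrightarrow> ce_diff br sM act p \<omega> xs = 0"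
  by (simp add: ce_diff_def)

context
  fixes sM :: "'k::field \<Rightarrow> 'm::ab_group_add \<Rightarrow> 'm"
  assumes "vector_space sM"
begin

interpretation vector_space sM by fact

lemma ce_diff_0: "ce_diff br sM act 0 \<omega> = cochain1 (\<lambda>x. act x (\<omega> []))"
  by (rule eq_cochainI) (simp_all add: ce_diff_length ce_diff_def del_nth_def)

lemma ce_diff_1:
  "ce_diff br sM act 1 \<omega> = cochain2 (\<lambda>x y. act x (\<omega> [y]) - act y (\<omega> [x]) - \<omega> [br x y])"
  by (rule eq_cochainI) (simp_all add: ce_diff_length ce_diff_def del_nth_def)

lemma ce_diff_2:
  "ce_diff br sM act 2 \<omega> = cochain3 (\<lambda>x y z.
     act x (\<omega> [y, z]) - act y (\<omega> [x, z]) + act z (\<omega> [x, y])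
     - \<omega> [br x y, z] + \<omega> [br x z, y] - \<omega> [br y z, x])"
  by (rule eq_cochainI) (simp_all add: ce_diff_length ce_diff_def del_nth_def eval_nat_numeral)

lemma ce_diff_3:
  "ce_diff br sM act 3 \<omega> = cochain4 (\<lambda>x y z w.
     act x (\<omega> [y, z, w]) - act y (\<omega> [x, z, w]) + act z (\<omega> [x, y, w]) - act w (\<omega> [x, y, z])
     - \<omega> [br x y, z, w] + \<omega> [br x z, y, w] - \<omega> [br y z, x, w]
     - \<omega> [br x w, y, z] + \<omega> [br y w, x, z] - \<omega> [br z w, x, y])"
  by (rule eq_cochainI) (simp_all add: ce_diff_length ce_diff_def del_nth_def eval_nat_numeral)

end

lemma cochains_0_eq: "cochains sV sM A 0 = {cochain0 v |v. v \<in> A}"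
  by (auto simp: cochains_def cochain0_def intro!: exI[of _ "_ []"] eq_cochainI)

lemma cochains_1_eq:
  "cochains sV sM A 1 = {cochain1 f |f. (\<forall>a. f a \<in> A) \<and> Vector_Spaces.linear sV sM f}"
proof (intro set_eqI iffI)
  fix \<omega> assume "\<omega> \<in> cochains sV sM A 1"
  then have "\<omega> = cochain1 (\<lambda>a. \<omega> [a])" and "\<forall>a. \<omega> [a] \<in> A"
    and "Vector_Spaces.linear sV sM (\<lambda>a. \<omega> [a])"
    by (auto simp: cochains_def intro: eq_cochainI dest: spec[of _ "[_]"])
  then show "\<omega> \<in> {cochain1 f |f. (\<forall>a. f a \<in> A) \<and> Vector_Spaces.linear sV sM f}"
    by blast
qed (auto simp: cochains_def cochain1_def length_eq_numeral_iff length_Suc_conv)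

lemma cochains_linear_alternating:
  assumes "\<omega> \<in> cochains sV sM A p" and "length xs = p"
  shows "i < p \<Longrightarrow> Vector_Spaces.linear sV sM (\<lambda>y. \<omega> (xs[i := y]))"
    and "i < j \<Longrightarrow> j < p \<Longrightarrow> xs ! i = xs ! j \<Longrightarrow> \<omega> xs = 0"
  using assms unfolding cochains_def by blast+

lemma cochains_2_eq:
  "cochains sV sM A 2 = {cochain2 f |f. (\<forall>a b. f a b \<in> A)
     \<and> (\<forall>b. Vector_Spaces.linear sV sM (\<lambda>a. f a b)) \<and> (\<forall>a. Vector_Spaces.linear sV sM (f a))
     \<and> (\<forall>a. f a a = 0)}"
proof (intro set_eqI iffI)
  fix \<omega> assume \<omega>: "\<omega> \<in> cochains sV sM A 2"
  note la = cochains_linear_alternating[OF \<omega>]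
  have "\<omega> = cochain2 (\<lambda>a b. \<omega> [a, b])"
    using \<omega> by (auto simp: cochains_def intro: eq_cochainI)
  moreover have "Vector_Spaces.linear sV sM (\<lambda>a. \<omega> [a, b])"
    and "Vector_Spaces.linear sV sM (\<lambda>b. \<omega> [a, b])" and "\<omega> [a, a] = 0" for a b
    using la(1)[of "[b, b]" 0] la(1)[of "[a, a]" 1] la(2)[of "[a, a]" 0 1] by simp_all
  ultimately show "\<omega> \<in> {cochain2 f |f. (\<forall>a b. f a b \<in> A)
     \<and> (\<forall>b. Vector_Spaces.linear sV sM (\<lambda>a. f a b)) \<and> (\<forall>a. Vector_Spaces.linear sV sM (f a))
     \<and> (\<forall>a. f a a = 0)}"
    using \<omega> by (auto simp: cochains_def)
qed (auto simp: cochains_def cochain2_def length_eq_numeral_iff less_numeral_nat_iff)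

lemma cochains_3_eq:
  "cochains sV sM A 3 = {cochain3 f |f. (\<forall>a b c. f a b c \<in> A)
     \<and> (\<forall>b c. Vector_Spaces.linear sV sM (\<lambda>a. f a b c))
     \<and> (\<forall>a c. Vector_Spaces.linear sV sM (\<lambda>b. f a b c))
     \<and> (\<forall>a b. Vector_Spaces.linear sV sM (f a b))
     \<and> (\<forall>a c. f a a c = 0) \<and> (\<forall>a b. f a b a = 0) \<and> (\<forall>a b. f a b b = 0)}"
proof (intro set_eqI iffI)
  fix \<omega> assume \<omega>: "\<omega> \<in> cochains sV sM A 3"
  note la = cochains_linear_alternating[OF \<omega>]
  have "\<omega> = cochain3 (\<lambda>a b c. \<omega> [a, b, c])"
    using \<omega> by (auto simp: cochains_def intro: eq_cochainI)
  moreover have "Vector_Spaces.linear sV sM (\<lambda>a. \<omega> [a, b, c])"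
    and "Vector_Spaces.linear sV sM (\<lambda>b. \<omega> [a, b, c])"
    and "Vector_Spaces.linear sV sM (\<lambda>c. \<omega> [a, b, c])"
    and "\<omega> [a, a, c] = 0" and "\<omega> [a, b, a] = 0" and "\<omega> [a, b, b] = 0" for a b c
    using la(1)[of "[b, b, c]" 0] la(1)[of "[a, a, c]" 1] la(1)[of "[a, b, b]" 2]
      la(2)[of "[a, a, c]" 0 1] la(2)[of "[a, b, a]" 0 2] la(2)[of "[a, b, b]" 1 2]
    by (simp_all add: numeral_2_eq_2)
  ultimately show "\<omega> \<in> {cochain3 f |f. (\<forall>a b c. f a b c \<in> A)
     \<and> (\<forall>b c. Vector_Spaces.linear sV sM (\<lambda>a. f a b c))
     \<and> (\<forall>a c. Vector_Spaces.linear sV sM (\<lambda>b. f a b c))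
     \<and> (\<forall>a b. Vector_Spaces.linear sV sM (f a b))
     \<and> (\<forall>a c. f a a c = 0) \<and> (\<forall>a b. f a b a = 0) \<and> (\<forall>a b. f a b b = 0)}"
    using \<omega> by (auto simp: cochains_def)
qed (auto simp: cochains_def cochain3_def length_eq_numeral_iff less_numeral_nat_iff)

lemma cocycles_eq:
  assumes "cochains sV sM A p = {c f |f. P f}"
    and "\<And>f. ce_diff br sM act p (c f) = 0 \<longleftrightarrow> Q f"
  shows "cocycles sV br sM act A p = {c f |f. P f \<and> Q f}"
  using assms by (auto simp: cocycles_def)

lemma coboundaries_eq_image:
  "coboundaries sV br sM act A 1 = ce_diff br sM act 0 ` cochains sV sM A 0"
  "coboundaries sV br sM act A 2 = ce_diff br sM act 1 ` cochains sV sM A 1"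
  "coboundaries sV br sM act A 3 = ce_diff br sM act 2 ` cochains sV sM A 2"
  by (simp_all add: coboundaries_def)

lemma vector_space_field: "vector_space ((*) :: 'k::field \<Rightarrow> 'k \<Rightarrow> 'k)"
  by unfold_locales (simp_all add: algebra_simps)

lemma vector_space_dual_scale: "vector_space (dual_scale :: 'k::field \<Rightarrow> ('v \<Rightarrow> 'k) \<Rightarrow> _)"
  by unfold_locales (simp_all add: dual_scale_def fun_eq_iff algebra_simps)

lemma vector_space_sym_scale: "vector_space (sym_scale :: 'k::field \<Rightarrow> ('v \<Rightarrow> 'v \<Rightarrow> 'k) \<Rightarrow> _)"
  by unfold_locales (simp_all add: sym_scale_def fun_eq_iff algebra_simps)

abbreviation "Ctriv sV p \<equiv> cochains sV (*) UNIV p"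
abbreviation "Cdual sV p \<equiv> cochains sV dual_scale (dual_space sV) p"
abbreviation "Csym sV p \<equiv> cochains sV sym_scale (sym2 sV) p"
abbreviation "Ztriv sV br p \<equiv> cocycles sV br (*) triv_act UNIV p"
abbreviation "Zdual sV br p \<equiv> cocycles sV br dual_scale (dual_act br) (dual_space sV) p"
abbreviation "Zsym sV br p \<equiv> cocycles sV br sym_scale (sym_act br) (sym2 sV) p"

lemma alpha_til_cochain:
  "alpha_til 2 (cochain2 g) = cochain1 g" "alpha_til 3 (cochain3 h) = cochain2 h"
  by (auto simp: fun_eq_iff alpha_til_def cochain1_def cochain2_def cochain3_def
      length_eq_numeral_iff length_Suc_conv)

lemma S_map_cochain1: "S_map (cochain1 E) = (\<lambda>y z. E y z + E z y)"
  by (simp add: S_map_def)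

lemma beta2_til_cochain2: "beta2_til (cochain2 W) = cochain1 (\<lambda>x y z. W x y z + W x z y)"
  by (auto simp: fun_eq_iff beta2_til_def cochain1_def cochain2_def)

lemma Gamma_eq_cochain3: "Gamma br \<kappa> = cochain3 (\<lambda>x y z. \<kappa> (br x y) z)"
  by (simp add: fun_eq_iff Gamma_def cochain3_def)

lemma Gamma_zero: "Gamma br 0 = (0 :: 'v list \<Rightarrow> 'k::field)"
  by (simp add: Gamma_def fun_eq_iff)

lemma module_cscale:
  "module (cscale ((*) :: 'k::field \<Rightarrow> _) :: _ \<Rightarrow> ('v list \<Rightarrow> 'k) \<Rightarrow> _)"
  "module (cscale (dual_scale :: 'k \<Rightarrow> _) :: _ \<Rightarrow> ('v list \<Rightarrow> 'v \<Rightarrow> 'k) \<Rightarrow> _)"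
  "module (cscale (sym_scale :: 'k \<Rightarrow> _) :: _ \<Rightarrow> ('v list \<Rightarrow> 'v \<Rightarrow> 'v \<Rightarrow> 'k) \<Rightarrow> _)"
  by (simp_all add: module_iff_vector_space vector_space_cscale vector_space_field
      vector_space_dual_scale vector_space_sym_scale)

lemma module_hom_alpha_til:
  "module_hom (cscale (*)) (cscale dual_scale) (alpha_til p :: ('v list \<Rightarrow> 'k::field) \<Rightarrow> _)"
  by (auto simp: module_hom_iff module_cscale alpha_til_def cscale_def dual_scale_def fun_eq_iff)

lemma module_hom_S_map:
  "module_hom (cscale dual_scale) sym_scale (S_map :: ('v list \<Rightarrow> 'v \<Rightarrow> 'k::field) \<Rightarrow> _)"
  by (simp add: module_hom_iff module_iff_vector_space vector_space_cscale vector_space_dual_scale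
      vector_space_sym_scale S_map_def cscale_def dual_scale_def sym_scale_def fun_eq_iff
      algebra_simps)

lemma module_hom_Gamma:
  "module_hom sym_scale (cscale (*)) (Gamma br :: ('v \<Rightarrow> 'v \<Rightarrow> 'k::field) \<Rightarrow> _)"
  by (simp add: module_hom_iff module_iff_vector_space vector_space_cscale vector_space_field
      vector_space_sym_scale Gamma_def cscale_def sym_scale_def fun_eq_iff)

lemma module_hom_beta2_til:
  "module_hom (cscale dual_scale) (cscale sym_scale) (beta2_til :: ('v list \<Rightarrow> 'v \<Rightarrow> 'k::field) \<Rightarrow> _)"
  by (auto simp: module_hom_iff module_cscale beta2_til_def cscale_def dual_scale_def sym_scale_def
      fun_eq_iff algebra_simps)

lemma subspace_zero_sym_scale: "module.subspace (sym_scale :: 'k::field \<Rightarrow> ('v \<Rightarrow> 'v \<Rightarrow> 'k) \<Rightarrow> _) {0}"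
  by (simp add: module.subspace_single_0 module_iff_vector_space vector_space_sym_scale)

section \<open>Lie algebras and multilinear forms\<close>

locale Lie_algebra =
  fixes sV :: "'k::field \<Rightarrow> 'v::ab_group_add \<Rightarrow> 'v" and br :: "'v \<Rightarrow> 'v \<Rightarrow> 'v"
  assumes lie_algebra: "lie_algebra sV br"
begin

lemma vector_space_sV: "vector_space sV"
  using lie_algebra by (simp add: lie_algebra_def)

lemma br_linear:
  "Vector_Spaces.linear sV sV (br x)" "Vector_Spaces.linear sV sV (\<lambda>x. br x y)"
  using lie_algebra by (simp_all add: lie_algebra_def)

lemma br_bilinear:
  "br (x + y) z = br x z + br y z" "br z (x + y) = br z x + br z y"
  "br (sV c x) z = sV c (br x z)" "br z (sV c x) = sV c (br z x)"
  "br (- x) z = - br x z" "br z (- x) = - br z x"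
  "br 0 z = 0" "br z 0 = 0"
proof -
  interpret l: module_hom sV sV "br x" for x
    using br_linear(1) by (simp add: linear_iff_module_hom)
  interpret r: module_hom sV sV "\<lambda>x. br x y" for y
    using br_linear(2) by (simp add: linear_iff_module_hom)
  show "br (x + y) z = br x z + br y z" "br z (x + y) = br z x + br z y"
    "br (sV c x) z = sV c (br x z)" "br z (sV c x) = sV c (br z x)"
    "br (- x) z = - br x z" "br z (- x) = - br z x" "br 0 z = 0" "br z 0 = 0"
    by (simp_all add: l.add r.add l.scale r.scale l.neg r.neg)
qed

lemma br_self [simp]: "br x x = 0"
  using lie_algebra by (simp add: lie_algebra_def)

lemma br_antisym: "br y x = - br x y"
proof -
  have "br (x + y) (x + y) = br x x + br y x + (br x y + br y y)"
    by (simp only: br_bilinear(1,2))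
  then show ?thesis
    by (simp add: eq_neg_iff_add_eq_0)
qed

lemma jacobi: "br x (br y z) + br y (br z x) + br z (br x y) = 0"
  using lie_algebra by (simp add: lie_algebra_def)

lemma dual_space_linear:
  assumes "l \<in> dual_space sV"
  shows "l (x + y) = l x + l y" "l (sV c x) = c * l x" "l (- x) = - l x" "l (x - y) = l x - l y"
    "l 0 = 0"
proof -
  interpret module_hom sV "(*)" l
    using assms by (simp add: dual_space_def linear_iff_module_hom)
  show "l (x + y) = l x + l y" "l (sV c x) = c * l x" "l (- x) = - l x" "l (x - y) = l x - l y"
    "l 0 = 0"
    by (simp_all add: add scale neg diff)
qed

lemma dual_spaceI:
  "(\<And>x y. l (x + y) = l x + l y) \<Longrightarrow> (\<And>c x. l (sV c x) = c * l x) \<Longrightarrow> l \<in> dual_space sV"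
  using vector_space_sV vector_space_field by (simp add: dual_space_def linear_iff)

definition bilinear_form :: "('v \<Rightarrow> 'v \<Rightarrow> 'k) \<Rightarrow> bool"
  where "bilinear_form E \<longleftrightarrow> (\<forall>y. E y \<in> dual_space sV) \<and> (\<forall>z. (\<lambda>y. E y z) \<in> dual_space sV)"

definition trilinear_form :: "('v \<Rightarrow> 'v \<Rightarrow> 'v \<Rightarrow> 'k) \<Rightarrow> bool"
  where "trilinear_form t \<longleftrightarrow> (\<forall>a b. t a b \<in> dual_space sV)
    \<and> (\<forall>a c. (\<lambda>b. t a b c) \<in> dual_space sV) \<and> (\<forall>b c. (\<lambda>a. t a b c) \<in> dual_space sV)"

definition alternating_bilinear :: "('v \<Rightarrow> 'v \<Rightarrow> 'k) \<Rightarrow> bool"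
  where "alternating_bilinear f \<longleftrightarrow> bilinear_form f \<and> (\<forall>a. f a a = 0)"

definition alternating_trilinear :: "('v \<Rightarrow> 'v \<Rightarrow> 'v \<Rightarrow> 'k) \<Rightarrow> bool"
  where "alternating_trilinear t \<longleftrightarrow> trilinear_form t
    \<and> (\<forall>a c. t a a c = 0) \<and> (\<forall>a b. t a b a = 0) \<and> (\<forall>a b. t a b b = 0)"

lemma bilinear_form_linear:
  assumes "bilinear_form E"
  shows "E (x + y) z = E x z + E y z" "E z (x + y) = E z x + E z y"
    "E (sV c x) z = c * E x z" "E z (sV c x) = c * E z x"
    "E (- x) z = - E x z" "E z (- x) = - E z x" "E (x - y) z = E x z - E y z"
    "E z (x - y) = E z x - E z y" "E 0 z = 0" "E z 0 = 0"
  using assms dual_space_linear[of "\<lambda>y. E y z"] dual_space_linear[of "E z"]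
  by (simp_all add: bilinear_form_def)

lemma trilinear_form_linear:
  assumes "trilinear_form t"
  shows "t (x + y) b c = t x b c + t y b c" "t a (x + y) c = t a x c + t a y c"
    "t a b (x + y) = t a b x + t a b y"
    "t (sV r x) b c = r * t x b c" "t a (sV r x) c = r * t a x c" "t a b (sV r x) = r * t a b x"
    "t (- x) b c = - t x b c" "t a (- x) c = - t a x c" "t a b (- x) = - t a b x"
    "t 0 b c = 0" "t a 0 c = 0" "t a b 0 = 0"
  using assms dual_space_linear[of "\<lambda>x. t x b c"] dual_space_linear[of "\<lambda>x. t a x c"]
    dual_space_linear[of "t a b"]
  by (simp_all add: trilinear_form_def)

lemma bilinear_formI:
  assumes "\<And>x y z. E (x + y) z = E x z + E y z" "\<And>x y z. E z (x + y) = E z x + E z y"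
    "\<And>c x z. E (sV c x) z = c * E x z" "\<And>c x z. E z (sV c x) = c * E z x"
  shows "bilinear_form E"
  using assms by (simp add: bilinear_form_def dual_spaceI)

lemma trilinear_formI:
  assumes "\<And>x y b c. t (x + y) b c = t x b c + t y b c"
    "\<And>a x y c. t a (x + y) c = t a x c + t a y c" "\<And>a b x y. t a b (x + y) = t a b x + t a b y"
    "\<And>r x b c. t (sV r x) b c = r * t x b c" "\<And>r a x c. t a (sV r x) c = r * t a x c"
    "\<And>r a b x. t a b (sV r x) = r * t a b x"
  shows "trilinear_form t"
  using assms by (simp add: trilinear_form_def dual_spaceI)

lemma sym2_iff: "\<kappa> \<in> sym2 sV \<longleftrightarrow> bilinear_form \<kappa> \<and> (\<forall>y z. \<kappa> y z = \<kappa> z y)"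
  by (simp add: sym2_def bilinear_form_def dual_space_def)

lemma linear_dual_scale_iff:
  "Vector_Spaces.linear sV dual_scale F \<longleftrightarrow> (\<forall>z. (\<lambda>y. F y z) \<in> dual_space sV)"
  using vector_space_sV vector_space_dual_scale vector_space_field
  by (auto simp: linear_iff dual_space_def dual_scale_def fun_eq_iff)

lemma linear_sym_scale_iff:
  "Vector_Spaces.linear sV sym_scale F \<longleftrightarrow> (\<forall>y z. (\<lambda>x. F x y z) \<in> dual_space sV)"
  using vector_space_sV vector_space_sym_scale vector_space_field
  by (auto simp: linear_iff dual_space_def sym_scale_def fun_eq_iff)

lemma coefficient_module_triv: "coefficient_module (*) (triv_act :: 'v \<Rightarrow> 'k \<Rightarrow> 'k) UNIV"
  by (simp add: coefficient_module_def linear_iff triv_act_def vector_space_field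
      module.subspace_UNIV module_iff_vector_space)

lemma coefficient_module_dual: "coefficient_module dual_scale (dual_act br) (dual_space sV)"
  unfolding coefficient_module_def
proof (intro conjI allI)
  show "vector_space (dual_scale :: 'k \<Rightarrow> ('v \<Rightarrow> 'k) \<Rightarrow> _)"
    by (fact vector_space_dual_scale)
  show "Vector_Spaces.linear dual_scale dual_scale (dual_act br x)" for x
    by (simp add: linear_iff vector_space_dual_scale dual_act_def dual_scale_def fun_eq_iff)
  show "module.subspace dual_scale (dual_space sV)"
    by (auto simp: module.subspace_def module_iff_vector_space vector_space_dual_scale
        dual_scale_def dual_space_linear algebra_simps intro!: dual_spaceI)
qed

lemma coefficient_module_sym: "coefficient_module sym_scale (sym_act br) (sym2 sV)"
  unfolding coefficient_module_def
proof (intro conjI allI)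
  show "vector_space (sym_scale :: 'k \<Rightarrow> ('v \<Rightarrow> 'v \<Rightarrow> 'k) \<Rightarrow> _)"
    by (fact vector_space_sym_scale)
  show "Vector_Spaces.linear sym_scale sym_scale (sym_act br x)" for x
    by (simp add: linear_iff vector_space_sym_scale sym_act_def sym_scale_def fun_eq_iff
        algebra_simps)
  show "module.subspace sym_scale (sym2 sV)"
    by (auto simp: module.subspace_def module_iff_vector_space vector_space_sym_scale
        sym_scale_def sym2_iff bilinear_form_linear algebra_simps intro!: bilinear_formI)
qed

lemma Ctriv_1_eq: "Ctriv sV 1 = {cochain1 l |l. l \<in> dual_space sV}"
  unfolding cochains_1_eq by (simp add: dual_space_def)

lemma Ctriv_2_eq: "Ctriv sV 2 = {cochain2 f |f. alternating_bilinear f}"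
  unfolding cochains_2_eq
  by (simp add: alternating_bilinear_def bilinear_form_def dual_space_def conj_ac)

lemma Ctriv_3_eq: "Ctriv sV 3 = {cochain3 f |f. alternating_trilinear f}"
  unfolding cochains_3_eq
  by (simp add: alternating_trilinear_def trilinear_form_def dual_space_def conj_ac)

lemma Cdual_0_eq: "Cdual sV 0 = {cochain0 l |l. l \<in> dual_space sV}"
  by (simp add: cochains_0_eq)

lemma Cdual_1_eq: "Cdual sV 1 = {cochain1 E |E. bilinear_form E}"
  unfolding cochains_1_eq by (simp add: bilinear_form_def linear_dual_scale_iff)

lemma Cdual_2_eq: "Cdual sV 2 = {cochain2 W |W. trilinear_form W \<and> (\<forall>a c. W a a c = 0)}"
  unfolding cochains_2_eq by (simp add: trilinear_form_def linear_dual_scale_iff fun_eq_iff conj_ac)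

lemma Csym_0_eq: "Csym sV 0 = {cochain0 \<kappa> |\<kappa>. \<kappa> \<in> sym2 sV}"
  by (simp add: cochains_0_eq)

lemma Csym_1_eq:
  "Csym sV 1 = {cochain1 P |P. trilinear_form P \<and> (\<forall>a b c. P a b c = P a c b)}"
  unfolding cochains_1_eq
  by (auto simp: sym2_iff bilinear_form_def trilinear_form_def linear_sym_scale_iff)

definition triv_d1 :: "('v \<Rightarrow> 'k) \<Rightarrow> 'v \<Rightarrow> 'v \<Rightarrow> 'k"
  where "triv_d1 l x y = - l (br x y)"

definition triv_d2 :: "('v \<Rightarrow> 'v \<Rightarrow> 'k) \<Rightarrow> 'v \<Rightarrow> 'v \<Rightarrow> 'v \<Rightarrow> 'k"
  where "triv_d2 f x y z = - f (br x y) z + f (br x z) y - f (br y z) x"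

definition triv_d3 :: "('v \<Rightarrow> 'v \<Rightarrow> 'v \<Rightarrow> 'k) \<Rightarrow> 'v \<Rightarrow> 'v \<Rightarrow> 'v \<Rightarrow> 'v \<Rightarrow> 'k"
  where "triv_d3 f x y z w = - f (br x y) z w + f (br x z) y w - f (br y z) x w
    - f (br x w) y z + f (br y w) x z - f (br z w) x y"

definition dual_d1 :: "('v \<Rightarrow> 'v \<Rightarrow> 'k) \<Rightarrow> 'v \<Rightarrow> 'v \<Rightarrow> 'v \<Rightarrow> 'k"
  where "dual_d1 E x y z = - E y (br x z) + E x (br y z) - E (br x y) z"

definition dual_d2 :: "('v \<Rightarrow> 'v \<Rightarrow> 'v \<Rightarrow> 'k) \<Rightarrow> 'v \<Rightarrow> 'v \<Rightarrow> 'v \<Rightarrow> 'v \<Rightarrow> 'k"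
  where "dual_d2 W x y z t = - W y z (br x t) + W x z (br y t) - W x y (br z t)
    - W (br x y) z t + W (br x z) y t - W (br y z) x t"

definition sym_d1 :: "('v \<Rightarrow> 'v \<Rightarrow> 'v \<Rightarrow> 'k) \<Rightarrow> 'v \<Rightarrow> 'v \<Rightarrow> 'v \<Rightarrow> 'v \<Rightarrow> 'k"
  where "sym_d1 P x y a b = - P y (br x a) b - P y a (br x b) + P x (br y a) b + P x a (br y b)
    - P (br x y) a b"

lemma ce_diff_triv:
  "ce_diff br (*) triv_act 1 (cochain1 l) = cochain2 (triv_d1 l)"
  "ce_diff br (*) triv_act 2 (cochain2 f) = cochain3 (triv_d2 f)"
  "ce_diff br (*) triv_act 3 (cochain3 g) = cochain4 (triv_d3 g)"
  unfolding ce_diff_1[OF vector_space_field] ce_diff_2[OF vector_space_field]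
    ce_diff_3[OF vector_space_field]
  by (simp_all only: cochain_eq_iff)
    (simp_all add: fun_eq_iff triv_act_def triv_d1_def triv_d2_def triv_d3_def)

lemma ce_diff_dual:
  "ce_diff br dual_scale (dual_act br) 0 (cochain0 l) = cochain1 (triv_d1 l)"
  "ce_diff br dual_scale (dual_act br) 1 (cochain1 E) = cochain2 (dual_d1 E)"
  "ce_diff br dual_scale (dual_act br) 2 (cochain2 W) = cochain3 (dual_d2 W)"
  unfolding ce_diff_0[OF vector_space_dual_scale] ce_diff_1[OF vector_space_dual_scale]
    ce_diff_2[OF vector_space_dual_scale]
  by (simp_all only: cochain_eq_iff)
    (simp_all add: fun_eq_iff dual_act_def triv_d1_def dual_d1_def dual_d2_def)

lemma ce_diff_sym:
  "ce_diff br sym_scale (sym_act br) 0 (cochain0 \<kappa>) = cochain1 (\<lambda>x. sym_act br x \<kappa>)"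
  "ce_diff br sym_scale (sym_act br) 1 (cochain1 P) = cochain2 (sym_d1 P)"
  unfolding ce_diff_0[OF vector_space_sym_scale] ce_diff_1[OF vector_space_sym_scale]
  by (simp_all only: cochain_eq_iff) (simp_all add: fun_eq_iff sym_act_def sym_d1_def)

lemma Btriv_2_eq: "Btriv sV br 2 = {cochain2 (triv_d1 l) |l. l \<in> dual_space sV}"
  by (simp only: coboundaries_eq_image Ctriv_1_eq ce_diff_triv setcompr_eq_image image_image)

lemma Btriv_3_eq: "Btriv sV br 3 = {cochain3 (triv_d2 f) |f. alternating_bilinear f}"
  by (simp only: coboundaries_eq_image Ctriv_2_eq ce_diff_triv setcompr_eq_image image_image)

lemma Bdual_1_eq: "Bdual sV br 1 = {cochain1 (triv_d1 l) |l. l \<in> dual_space sV}"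
  by (simp only: coboundaries_eq_image Cdual_0_eq ce_diff_dual setcompr_eq_image image_image)

lemma Bdual_2_eq: "Bdual sV br 2 = {cochain2 (dual_d1 E) |E. bilinear_form E}"
  by (simp only: coboundaries_eq_image Cdual_1_eq ce_diff_dual setcompr_eq_image image_image)

lemma Bsym_1_eq: "Bsym sV br 1 = {cochain1 (\<lambda>x. sym_act br x \<kappa>) |\<kappa>. \<kappa> \<in> sym2 sV}"
  by (simp only: coboundaries_eq_image Csym_0_eq ce_diff_sym setcompr_eq_image image_image)

lemma Ztriv_2_eq: "Ztriv sV br 2 = {cochain2 f |f. alternating_bilinear f \<and> triv_d2 f = 0}"
  by (rule cocycles_eq[OF Ctriv_2_eq]) (simp only: ce_diff_triv cochain_eq_0_iff)

lemma Ztriv_3_eq: "Ztriv sV br 3 = {cochain3 f |f. alternating_trilinear f \<and> triv_d3 f = 0}"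
  by (rule cocycles_eq[OF Ctriv_3_eq]) (simp only: ce_diff_triv cochain_eq_0_iff)

lemma Zdual_1_eq: "Zdual sV br 1 = {cochain1 E |E. bilinear_form E \<and> dual_d1 E = 0}"
  by (rule cocycles_eq[OF Cdual_1_eq]) (simp only: ce_diff_dual cochain_eq_0_iff)

lemma Zdual_2_eq:
  "Zdual sV br 2 = {cochain2 W |W. trilinear_form W \<and> (\<forall>a c. W a a c = 0) \<and> dual_d2 W = 0}"
  by (rule cocycles_eq[OF Cdual_2_eq, unfolded conj_assoc])
    (simp only: ce_diff_dual cochain_eq_0_iff)

lemma Zsym_1_eq: "Zsym sV br 1 =
    {cochain1 P |P. trilinear_form P \<and> (\<forall>a b c. P a b c = P a c b) \<and> sym_d1 P = 0}"
  by (rule cocycles_eq[OF Csym_1_eq, unfolded conj_assoc])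
    (simp only: ce_diff_sym cochain_eq_0_iff)

section \<open>Identities between the differentials\<close>

lemma alternating_bilinear_antisym:
  assumes "alternating_bilinear f"
  shows "f b a = - f a b"
proof -
  have "bilinear_form f"
    using assms by (simp add: alternating_bilinear_def)
  then have "f (a + b) (a + b) = f a a + f a b + (f b a + f b b)"
    by (simp only: bilinear_form_linear)
  then show ?thesis
    using assms by (simp add: alternating_bilinear_def eq_neg_iff_add_eq_0 add.commute)
qed

lemma trilinear_form_bilinear:
  assumes "trilinear_form t"
  shows "bilinear_form (\<lambda>a b. t a b c)" and "bilinear_form (t a)"
  using assms by (simp_all add: trilinear_form_def bilinear_form_def)

lemma alternating_trilinear_antisym:
  assumes "alternating_trilinear t"
  shows "t b a c = - t a b c" and "t a c b = - t a b c"
proof -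
  have 12: "alternating_bilinear (\<lambda>a b. t a b c)" and 23: "alternating_bilinear (t a)"
    using assms trilinear_form_bilinear
    by (simp_all add: alternating_trilinear_def alternating_bilinear_def)
  show "t b a c = - t a b c"
    using alternating_bilinear_antisym[OF 12, of b a] by simp
  show "t a c b = - t a b c"
    using alternating_bilinear_antisym[OF 23, of c b] by simp
qed

lemma alternating_trilinear_cyclic:
  assumes "alternating_trilinear t"
  shows "t a b c = t b c a"
proof -
  have "t b c a = - t b a c"
    by (fact alternating_trilinear_antisym(2)[OF assms])
  also have "\<dots> = t a b c"
    using alternating_trilinear_antisym(1)[OF assms, of a b c] by simp
  finally show ?thesis ..
qed

lemma alternating_trilinearI:
  assumes t: "trilinear_form t" and "\<And>a c. t a a c = 0" and "\<And>a b. t a b b = 0"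
  shows "alternating_trilinear t"
proof -
  have "alternating_bilinear (\<lambda>a b. t a b c)" for c
    using assms trilinear_form_bilinear by (simp add: alternating_bilinear_def)
  then have "t a b a = - t b a a" for a b
    using alternating_bilinear_antisym[of "\<lambda>x y. t x y a" b a] by simp
  then show ?thesis
    using assms by (simp add: alternating_trilinear_def)
qed

lemma bilinear_form_add: "bilinear_form E \<Longrightarrow> bilinear_form F \<Longrightarrow> bilinear_form (\<lambda>a b. E a b + F a b)"
  and bilinear_form_diff: "bilinear_form E \<Longrightarrow> bilinear_form F \<Longrightarrow> bilinear_form (\<lambda>a b. E a b - F a b)"
  and bilinear_form_scale: "bilinear_form E \<Longrightarrow> bilinear_form (\<lambda>a b. c * E a b)"
  and bilinear_form_transpose: "bilinear_form E \<Longrightarrow> bilinear_form (\<lambda>a b. E b a)"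
  by (auto intro!: bilinear_formI simp: bilinear_form_linear algebra_simps)

lemma trilinear_form_add:
    "trilinear_form t \<Longrightarrow> trilinear_form u \<Longrightarrow> trilinear_form (\<lambda>a b c. t a b c + u a b c)"
  and trilinear_form_diff:
    "trilinear_form t \<Longrightarrow> trilinear_form u \<Longrightarrow> trilinear_form (\<lambda>a b c. t a b c - u a b c)"
  and trilinear_form_swap23: "trilinear_form t \<Longrightarrow> trilinear_form (\<lambda>a b c. t a c b)"
  by (auto intro!: trilinear_formI simp: trilinear_form_linear algebra_simps)

lemma trilinear_form_bracket: "bilinear_form \<kappa> \<Longrightarrow> trilinear_form (\<lambda>x y z. \<kappa> (br x y) z)"
  by (auto intro!: trilinear_formI simp: bilinear_form_linear br_bilinear)

lemma trilinear_form_dual_d1: "bilinear_form E \<Longrightarrow> trilinear_form (dual_d1 E)"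
  by (auto intro!: trilinear_formI simp: dual_d1_def bilinear_form_linear br_bilinear algebra_simps)

lemma br_derivation: "br x (br y z) = br (br x y) z + br y (br x z)"
proof -
  have "br y (br z x) = - br y (br x z)" and "br z (br x y) = - br (br x y) z"
    using br_antisym[of x z] br_antisym[of "br x y" z] by (simp_all add: br_bilinear)
  with jacobi[of x y z] show ?thesis
    by (auto simp: diff_eq_eq)
qed

lemma sym2_invD:
  assumes "\<kappa> \<in> sym2_inv sV br"
  shows "bilinear_form \<kappa>" and "\<kappa> y z = \<kappa> z y"
    and "\<kappa> (br x y) z = - \<kappa> y (br x z)" and "\<kappa> (br x y) z = \<kappa> x (br y z)"
proof -
  show \<kappa>: "bilinear_form \<kappa>" and "\<kappa> y z = \<kappa> z y"
    using assms by (simp_all add: sym2_inv_def sym2_iff)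
  have inv: "\<kappa> (br a b) c = - \<kappa> b (br a c)" for a b c
  proof -
    have "sym_act br a \<kappa> b c = 0"
      using assms by (simp add: sym2_inv_def)
    then show ?thesis
      by (simp add: sym_act_def) (metis minus_minus)
  qed
  then show "\<kappa> (br x y) z = - \<kappa> y (br x z)" .
  show "\<kappa> (br x y) z = \<kappa> x (br y z)"
    using inv[of y x z] br_antisym[of x y] by (simp add: bilinear_form_linear[OF \<kappa>])
qed

lemma dual_d1_alternating:
  assumes "alternating_bilinear f"
  shows "dual_d1 f = triv_d2 f"
proof (intro ext)
  fix x y z
  have "f (br x z) y = - f y (br x z)" and "f (br y z) x = - f x (br y z)"
    by (fact alternating_bilinear_antisym[OF assms])+
  then show "dual_d1 f x y z = triv_d2 f x y z"
    by (simp add: dual_d1_def triv_d2_def)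
qed

lemma dual_d2_alternating:
  assumes "alternating_trilinear f"
  shows "dual_d2 f = triv_d3 f"
proof (intro ext)
  fix x y z t
  have "f y z (br x t) = f (br x t) y z" and "f x z (br y t) = f (br y t) x z"
    and "f x y (br z t) = f (br z t) x y"
    using alternating_trilinear_cyclic[OF assms, of "br x t" y z]
      alternating_trilinear_cyclic[OF assms, of "br y t" x z]
      alternating_trilinear_cyclic[OF assms, of "br z t" x y]
    by simp_all
  then show "dual_d2 f x y z t = triv_d3 f x y z t"
    by (simp add: dual_d2_def triv_d3_def)
qed

lemma sym_act_symmetrization:
  assumes "bilinear_form E"
  shows "sym_act br x (\<lambda>y z. E y z + E z y) y z = dual_d1 E x y z + dual_d1 E x z y"
proof -
  have "E x (br z y) = - E x (br y z)"
    using br_antisym[of y z] by (simp add: bilinear_form_linear[OF assms])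
  then show ?thesis
    unfolding sym_act_def dual_d1_def by algebra
qed

lemma sym_d1_symmetrization:
  assumes W: "trilinear_form W" and "\<And>a c. W a a c = 0"
  shows "sym_d1 (\<lambda>x y z. W x y z + W x z y) x y a b = dual_d2 W x y a b + dual_d2 W x y b a"
proof -
  have "alternating_bilinear (\<lambda>a b. W a b c)" for c
    using assms trilinear_form_bilinear by (simp add: alternating_bilinear_def)
  then have antisym: "W v u c = - W u v c" for u v c
    using alternating_bilinear_antisym[of "\<lambda>a b. W a b c" u v] by simp
  have "W (br x a) y b = - W y (br x a) b" "W (br y a) x b = - W x (br y a) b"
    "W (br x b) y a = - W y (br x b) a" "W (br y b) x a = - W x (br y b) a"
    by (fact antisym)+
  moreover have "W x y (br b a) = - W x y (br a b)"
    using br_antisym[of a b] by (simp add: trilinear_form_linear[OF W])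
  ultimately show ?thesis
    unfolding sym_d1_def dual_d2_def by algebra
qed

lemma dual_d1_invariant:
  assumes "\<kappa> \<in> sym2_inv sV br"
  shows "dual_d1 \<kappa> = (\<lambda>x y z. \<kappa> (br x y) z)"
proof (intro ext)
  fix x y z
  have "\<kappa> y (br x z) = - \<kappa> (br x y) z" and "\<kappa> x (br y z) = \<kappa> (br x y) z"
    using sym2_invD(3,4)[OF assms, of x y z] by simp_all
  then show "dual_d1 \<kappa> x y z = \<kappa> (br x y) z"
    by (simp add: dual_d1_def)
qed

lemma dual_d2_dual_d1:
  assumes E: "bilinear_form E"
  shows "dual_d2 (dual_d1 E) = 0"
proof (intro ext)
  fix x y z t
  have left: "E w (br a (br b c)) = E w (br (br a b) c) + E w (br b (br a c))" for w a b c
    using br_derivation[of a b c] by (simp add: bilinear_form_linear[OF E])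
  have right: "E (br (br a b) c) w = E (br a (br b c)) w - E (br b (br a c)) w" for w a b c
  proof -
    have "br (br a b) c = br a (br b c) - br b (br a c)"
      using br_derivation[of a b c] by simp
    then show ?thesis
      by (simp add: bilinear_form_linear[OF E])
  qed
  have "E (br (br x z) y) t = - E (br y (br x z)) t" "E (br (br y z) x) t = - E (br x (br y z)) t"
    using br_antisym[of y "br x z"] br_antisym[of x "br y z"]
    by (simp_all add: bilinear_form_linear[OF E])
  with left[of z x y t] left[of y x z t] left[of x y z t] right[of x y z t]
  show "dual_d2 (dual_d1 E) x y z t = 0 x y z t"
    unfolding dual_d2_def dual_d1_def zero_fun_def by algebra
qed

lemma dual_d2_diff: "dual_d2 (\<lambda>x y z. W x y z - D x y z) = dual_d2 W - dual_d2 D"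
  by (simp add: fun_eq_iff dual_d2_def algebra_simps)

lemma symmetrization_triv_d1:
  assumes "l \<in> dual_space sV"
  shows "triv_d1 l y z + triv_d1 l z y = 0"
  using br_antisym[of y z] by (simp add: triv_d1_def dual_space_linear[OF assms])

lemma symmetrization_sym2: "bilinear_form E \<Longrightarrow> (\<lambda>y z. E y z + E z y) \<in> sym2 sV"
  by (simp add: sym2_iff bilinear_form_add bilinear_form_transpose add.commute)

lemma symmetrization_invariant:
  assumes "bilinear_form E" and "\<And>x y z. dual_d1 E x y z + dual_d1 E x z y = 0"
  shows "(\<lambda>y z. E y z + E z y) \<in> sym2_inv sV br"
  using assms by (simp add: sym2_inv_def symmetrization_sym2 fun_eq_iff sym_act_symmetrization)

lemma Gamma_form_alternating:
  assumes \<kappa>: "\<kappa> \<in> sym2_inv sV br" and "(2::'k) \<noteq> 0"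
  shows "alternating_trilinear (\<lambda>x y z. \<kappa> (br x y) z)"
proof (rule alternating_trilinearI)
  show "trilinear_form (\<lambda>x y z. \<kappa> (br x y) z)"
    by (rule trilinear_form_bracket[OF sym2_invD(1)[OF \<kappa>]])
  show "\<kappa> (br a a) c = 0" for a c
    by (simp add: bilinear_form_linear[OF sym2_invD(1)[OF \<kappa>]])
  show "\<kappa> (br a b) b = 0" for a b
  proof (rule self_neg_eq_0[OF \<open>2 \<noteq> 0\<close>])
    show "\<kappa> (br a b) b = - \<kappa> (br a b) b"
      using sym2_invD(3)[OF \<kappa>, of a b b] sym2_invD(2)[OF \<kappa>, of b "br a b"] by simp
  qed
qed

lemma Gamma_form_closed:
  assumes \<kappa>: "\<kappa> \<in> sym2_inv sV br" and "(2::'k) \<noteq> 0"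
  shows "triv_d3 (\<lambda>x y z. \<kappa> (br x y) z) = 0"
proof -
  have "triv_d3 (\<lambda>x y z. \<kappa> (br x y) z) = dual_d2 (\<lambda>x y z. \<kappa> (br x y) z)"
    by (simp add: dual_d2_alternating[OF Gamma_form_alternating[OF assms]])
  also have "\<dots> = dual_d2 (dual_d1 \<kappa>)"
    by (simp add: dual_d1_invariant[OF \<kappa>])
  also have "\<dots> = 0"
    by (rule dual_d2_dual_d1[OF sym2_invD(1)[OF \<kappa>]])
  finally show ?thesis .
qed

lemma dual_d1_decomposition:
  assumes E: "bilinear_form E" and S: "(\<lambda>y z. E y z + E z y) \<in> sym2_inv sV br"
  shows "dual_d1 E x y z + dual_d1 E x y z
    = E (br x y) z + E z (br x y) + triv_d2 (\<lambda>a b. E a b - E b a) x y z"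
proof -
  have "dual_d1 (\<lambda>a b. E a b + E b a) x y z = E (br x y) z + E z (br x y)"
    by (simp add: dual_d1_invariant[OF S])
  moreover have "dual_d1 (\<lambda>a b. E a b - E b a) x y z = triv_d2 (\<lambda>a b. E a b - E b a) x y z"
    using E by (simp add: dual_d1_alternating alternating_bilinear_def bilinear_form_diff
        bilinear_form_transpose)
  ultimately show ?thesis
    unfolding dual_d1_def by algebra
qed

(* algebra is more reliable over fields when the hypotheses are stated in the form p = 0. *)
lemma dual_d1_split:
  assumes E: "bilinear_form E" and S: "(\<lambda>y z. E y z + E z y) \<in> sym2_inv sV br" and hh: "h + h = 1"
  shows "dual_d1 E x y z
    = h * E (br x y) z + h * E z (br x y) + triv_d2 (\<lambda>a b. h * (E a b - E b a)) x y z"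
proof -
  have "dual_d1 E x y z + dual_d1 E x y z - (E (br x y) z + E z (br x y))
      - triv_d2 (\<lambda>a b. E a b - E b a) x y z = 0"
    and "h + h - 1 = 0"
    and "triv_d2 (\<lambda>a b. h * (E a b - E b a)) x y z = h * triv_d2 (\<lambda>a b. E a b - E b a) x y z"
    using dual_d1_decomposition[OF E S, of x y z] hh by (simp_all add: triv_d2_def algebra_simps)
  then show ?thesis
    by algebra
qed

lemma alternating_closed_correction:
  assumes W: "trilinear_form W" "\<And>a c. W a a c = 0" "dual_d2 W = 0" and \<kappa>: "\<kappa> \<in> sym2 sV"
    and sym_part: "\<And>x y z. W x y z + W x z y = sym_act br x \<kappa> y z" and hh: "h + h = 1"
  shows "alternating_trilinear (\<lambda>x y z. W x y z - dual_d1 (\<lambda>a b. h * \<kappa> a b) x y z)"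
    (is "alternating_trilinear ?g")
    and "triv_d3 (\<lambda>x y z. W x y z - dual_d1 (\<lambda>a b. h * \<kappa> a b) x y z) = 0"
proof -
  have \<kappa>_bil: "bilinear_form \<kappa>" and \<kappa>_sym: "\<kappa> y z = \<kappa> z y" for y z
    using \<kappa> by (simp_all add: sym2_iff)
  have hk: "bilinear_form (\<lambda>a b. h * \<kappa> a b)"
    by (rule bilinear_form_scale[OF \<kappa>_bil])
  show alt: "alternating_trilinear ?g"
  proof (rule alternating_trilinearI)
    show "trilinear_form ?g"
      by (rule trilinear_form_diff[OF W(1) trilinear_form_dual_d1[OF hk]])
    show "?g a a c = 0" for a c
      by (simp add: dual_d1_def W(2) bilinear_form_linear[OF \<kappa>_bil])
    show "?g a b b = 0" for a b
    proof -
      have "W a b b + W a b b + \<kappa> (br a b) b + \<kappa> b (br a b) = 0"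
        using sym_part[of a b b] by (simp add: sym_act_def)
      moreover have "\<kappa> b (br a b) - \<kappa> (br a b) b = 0" and "\<kappa> a (br b b) = 0" and "h + h - 1 = 0"
        using \<kappa>_sym[of b "br a b"] hh by (simp_all add: bilinear_form_linear[OF \<kappa>_bil])
      ultimately show ?thesis
        unfolding dual_d1_def by algebra
    qed
  qed
  have "dual_d2 ?g = 0"
    using W(3) dual_d2_dual_d1[OF hk] by (simp add: dual_d2_diff)
  then show "triv_d3 ?g = 0"
    by (simp add: dual_d2_alternating[OF alt, symmetric])
qed

lemma coboundaries_subspaces:
  "module.subspace (cscale (*)) (Btriv sV br p)"
  "module.subspace (cscale dual_scale) (Bdual sV br p)"
  "module.subspace (cscale sym_scale) (Bsym sV br p)"
  by (fact coboundaries_subspace[OF vector_space_sV coefficient_module_triv]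
      coboundaries_subspace[OF vector_space_sV coefficient_module_dual]
      coboundaries_subspace[OF vector_space_sV coefficient_module_sym])+

lemma zero_mem_coboundaries:
  "0 \<in> Btriv sV br p" "0 \<in> Bdual sV br p" "0 \<in> Bsym sV br p"
  using module.subspace_0[OF _ coboundaries_subspaces(1)]
    module.subspace_0[OF _ coboundaries_subspaces(2)]
    module.subspace_0[OF _ coboundaries_subspaces(3)]
  by (simp_all add: module_cscale)

lemma alpha_til_2_coboundary: "\<omega> \<in> Btriv sV br 2 \<Longrightarrow> alpha_til 2 \<omega> \<in> Bdual sV br 1"
  unfolding Btriv_2_eq Bdual_1_eq
  by (auto simp: alpha_til_cochain)

lemma alpha_til_2_cocycle: "\<omega> \<in> Ztriv sV br 2 \<Longrightarrow> alpha_til 2 \<omega> \<in> Zdual sV br 1"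
  unfolding Ztriv_2_eq Zdual_1_eq
  by (auto simp: alpha_til_cochain dual_d1_alternating alternating_bilinear_def)

lemma alpha_til_2_reflects_coboundaries:
  "\<omega> \<in> Ztriv sV br 2 \<Longrightarrow> alpha_til 2 \<omega> \<in> Bdual sV br 1 \<Longrightarrow> \<omega> \<in> Btriv sV br 2"
  unfolding Ztriv_2_eq Bdual_1_eq Btriv_2_eq
  by (auto simp: alpha_til_cochain cochain_eq_iff)

lemma S_map_coboundary: "\<eta> \<in> Bdual sV br 1 \<Longrightarrow> S_map \<eta> = 0"
  unfolding Bdual_1_eq
  by (auto simp: S_map_cochain1 symmetrization_triv_d1 intro!: ext)

lemma S_map_cocycle: "\<eta> \<in> Zdual sV br 1 \<Longrightarrow> S_map \<eta> \<in> sym2_inv sV br"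
  unfolding Zdual_1_eq
  by (auto simp: S_map_cochain1 intro!: symmetrization_invariant)

lemma S_map_alpha_til_2:
  assumes "\<omega> \<in> Ztriv sV br 2"
  shows "S_map (alpha_til 2 \<omega>) = 0"
proof (intro ext)
  fix y z
  obtain f where \<omega>: "\<omega> = cochain2 f" and f: "alternating_bilinear f"
    using assms by (auto simp: Ztriv_2_eq)
  show "S_map (alpha_til 2 \<omega>) y z = 0 y z"
    using alternating_bilinear_antisym[OF f, of y z]
    by (simp add: \<omega> alpha_til_cochain S_map_cochain1)
qed

lemma S_map_kernel:
  assumes \<eta>: "\<eta> \<in> Zdual sV br 1" and S: "S_map \<eta> = 0" and two: "(2::'k) \<noteq> 0"
  shows "\<exists>\<omega>\<in>Ztriv sV br 2. \<eta> - alpha_til 2 \<omega> \<in> Bdual sV br 1"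
proof -
  obtain E where \<eta>_eq: "\<eta> = cochain1 E" and E: "bilinear_form E" "dual_d1 E = 0"
    using \<eta> unfolding Zdual_1_eq by blast
  have "E y z + E z y = 0" for y z
    using fun_cong[OF fun_cong[OF S, of y], of z] by (simp add: \<eta>_eq S_map_cochain1)
  then have "E a a = 0" for a
    using self_neg_eq_0[OF two] by (metis add_eq_0_iff)
  then have alt: "alternating_bilinear E"
    using E(1) by (simp add: alternating_bilinear_def)
  then have "cochain2 E \<in> Ztriv sV br 2"
    using E(2) by (auto simp: Ztriv_2_eq dual_d1_alternating[symmetric])
  moreover have "\<eta> - alpha_til 2 (cochain2 E) = 0"
    by (simp add: \<eta>_eq alpha_til_cochain)
  ultimately show ?thesis
    using zero_mem_coboundaries by metis
qed

lemma Gamma_cocycle: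
  "\<kappa> \<in> sym2_inv sV br \<Longrightarrow> (2::'k) \<noteq> 0 \<Longrightarrow> Gamma br \<kappa> \<in> Ztriv sV br 3"
  by (auto simp: Ztriv_3_eq Gamma_eq_cochain3 Gamma_form_alternating Gamma_form_closed)

lemma Gamma_S_map:
  assumes "\<eta> \<in> Zdual sV br 1"
  shows "Gamma br (S_map \<eta>) \<in> Btriv sV br 3"
proof -
  obtain E where \<eta>_eq: "\<eta> = cochain1 E" and E: "bilinear_form E" "dual_d1 E = 0"
    using assms unfolding Zdual_1_eq by blast
  have S: "(\<lambda>y z. E y z + E z y) \<in> sym2_inv sV br"
    using E by (simp add: symmetrization_invariant)
  have "(\<lambda>x y z. E (br x y) z + E z (br x y)) = triv_d2 (\<lambda>a b. E b a - E a b)"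
  proof (intro ext)
    fix x y z
    show "E (br x y) z + E z (br x y) = triv_d2 (\<lambda>a b. E b a - E a b) x y z"
      using dual_d1_decomposition[OF E(1) S, of x y z] E(2)
      unfolding triv_d2_def by (simp add: algebra_simps)
  qed
  moreover have "alternating_bilinear (\<lambda>a b. E b a - E a b)"
    using E(1) by (simp add: alternating_bilinear_def bilinear_form_diff bilinear_form_transpose)
  ultimately show ?thesis
    unfolding Btriv_3_eq by (auto simp: \<eta>_eq S_map_cochain1 Gamma_eq_cochain3)
qed

lemma Gamma_kernel:
  assumes \<kappa>: "\<kappa> \<in> sym2_inv sV br" and "Gamma br \<kappa> \<in> Btriv sV br 3" and two: "(2::'k) \<noteq> 0"
  shows "\<exists>\<eta>\<in>Zdual sV br 1. \<kappa> - S_map \<eta> \<in> {0}"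
proof -
  obtain \<theta> where \<theta>: "alternating_bilinear \<theta>"
    and \<Gamma>: "(\<lambda>x y z. \<kappa> (br x y) z) = triv_d2 \<theta>"
    using assms(2) unfolding Btriv_3_eq by (auto simp: Gamma_eq_cochain3 cochain_eq_iff)
  define h :: 'k where "h = inverse 2"
  have hh: "h + h = 1"
    unfolding h_def by (rule half_add_half[OF two])
  define E where "E a b = h * (\<kappa> a b - \<theta> a b)" for a b
  have "bilinear_form E"
    using sym2_invD(1)[OF \<kappa>] \<theta> unfolding E_def alternating_bilinear_def
    by (simp add: bilinear_form_scale bilinear_form_diff)
  moreover have "dual_d1 E = 0"
  proof (intro ext)
    fix x y z
    have "dual_d1 \<kappa> x y z - triv_d2 \<theta> x y z = 0" and "dual_d1 \<theta> x y z - triv_d2 \<theta> x y z = 0"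
      using \<Gamma> by (simp_all add: dual_d1_invariant[OF \<kappa>] dual_d1_alternating[OF \<theta>] fun_eq_iff)
    then show "dual_d1 E x y z = 0 x y z"
      unfolding dual_d1_def E_def zero_fun_apply by algebra
  qed
  moreover have "S_map (cochain1 E) = \<kappa>"
  proof (intro ext)
    fix y z
    have "\<kappa> z y - \<kappa> y z = 0" and "\<theta> z y + \<theta> y z = 0" and "h + h - 1 = 0"
      using sym2_invD(2)[OF \<kappa>, of z y] alternating_bilinear_antisym[OF \<theta>, of y z] hh by simp_all
    then show "S_map (cochain1 E) y z = \<kappa> y z"
      unfolding S_map_cochain1 E_def by algebra
  qed
  ultimately show ?thesis
    unfolding Zdual_1_eq by auto
qed

lemma alpha_til_3_coboundary:
  assumes "\<omega> \<in> Btriv sV br 3"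
  shows "alpha_til 3 \<omega> \<in> Bdual sV br 2"
proof -
  obtain f where "\<omega> = cochain3 (triv_d2 f)" and f: "alternating_bilinear f"
    using assms unfolding Btriv_3_eq by blast
  then have "alpha_til 3 \<omega> = cochain2 (dual_d1 f)"
    by (simp add: alpha_til_cochain dual_d1_alternating)
  then show ?thesis
    using f unfolding Bdual_2_eq alternating_bilinear_def by blast
qed

lemma alpha_til_3_cocycle: "\<omega> \<in> Ztriv sV br 3 \<Longrightarrow> alpha_til 3 \<omega> \<in> Zdual sV br 2"
  unfolding Ztriv_3_eq Zdual_2_eq
  by (auto simp: alpha_til_cochain dual_d2_alternating alternating_trilinear_def)

lemma alpha_til_3_Gamma:
  assumes "\<kappa> \<in> sym2_inv sV br"
  shows "alpha_til 3 (Gamma br \<kappa>) \<in> Bdual sV br 2"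
proof -
  have "alpha_til 3 (Gamma br \<kappa>) = cochain2 (dual_d1 \<kappa>)"
    by (simp add: Gamma_eq_cochain3 alpha_til_cochain dual_d1_invariant[OF assms])
  then show ?thesis
    using sym2_invD(1)[OF assms] unfolding Bdual_2_eq by blast
qed

lemma alpha_til_3_kernel:
  assumes \<omega>: "\<omega> \<in> Ztriv sV br 3" and "alpha_til 3 \<omega> \<in> Bdual sV br 2" and two: "(2::'k) \<noteq> 0"
  shows "\<exists>\<kappa>\<in>sym2_inv sV br. \<omega> - Gamma br \<kappa> \<in> Btriv sV br 3"
proof -
  obtain f where \<omega>_eq: "\<omega> = cochain3 f" and f: "alternating_trilinear f"
    using \<omega> unfolding Ztriv_3_eq by blast
  obtain E where E: "bilinear_form E" and f_eq: "f = dual_d1 E"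
    using assms(2) unfolding Bdual_2_eq by (auto simp: \<omega>_eq alpha_til_cochain cochain_eq_iff)
  define h :: 'k where "h = inverse 2"
  have hh: "h + h = 1"
    unfolding h_def by (rule half_add_half[OF two])
  have f_antisym: "dual_d1 E x y z + dual_d1 E x z y = 0" for x y z
    using alternating_trilinear_antisym(2)[OF f, of x y z] by (simp add: f_eq)
  define \<kappa> where "\<kappa> y z = h * E y z + h * E z y" for y z
  have "\<kappa> \<in> sym2_inv sV br"
    unfolding \<kappa>_def
  proof (rule symmetrization_invariant)
    show "bilinear_form (\<lambda>a b. h * E a b)"
      by (rule bilinear_form_scale[OF E])
    show "dual_d1 (\<lambda>a b. h * E a b) x y z + dual_d1 (\<lambda>a b. h * E a b) x z y = 0" for x y z
      using f_antisym[of x y z] unfolding dual_d1_def by algebra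
  qed
  moreover have "f - (\<lambda>x y z. \<kappa> (br x y) z) = triv_d2 (\<lambda>a b. h * (E a b - E b a))"
    using dual_d1_split[OF E symmetrization_invariant[OF E f_antisym] hh]
    by (simp add: fun_eq_iff f_eq \<kappa>_def)
  then have "\<omega> - Gamma br \<kappa> = cochain3 (triv_d2 (\<lambda>a b. h * (E a b - E b a)))"
    by (simp add: \<omega>_eq Gamma_eq_cochain3 cochain_diff)
  moreover have "alternating_bilinear (\<lambda>a b. h * (E a b - E b a))"
    using E by (simp add: alternating_bilinear_def bilinear_form_scale bilinear_form_diff
        bilinear_form_transpose)
  ultimately show ?thesis
    unfolding Btriv_3_eq by blast
qed

lemma beta2_til_coboundary:
  assumes "\<omega> \<in> Bdual sV br 2"
  shows "beta2_til \<omega> \<in> Bsym sV br 1"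
proof -
  obtain E where \<omega>_eq: "\<omega> = cochain2 (dual_d1 E)" and E: "bilinear_form E"
    using assms unfolding Bdual_2_eq by blast
  have "(\<lambda>x y z. dual_d1 E x y z + dual_d1 E x z y) = (\<lambda>x. sym_act br x (\<lambda>y z. E y z + E z y))"
    by (simp add: fun_eq_iff sym_act_symmetrization[OF E])
  then have "beta2_til \<omega> = cochain1 (\<lambda>x. sym_act br x (\<lambda>y z. E y z + E z y))"
    by (simp add: \<omega>_eq beta2_til_cochain2)
  then show ?thesis
    using symmetrization_sym2[OF E] unfolding Bsym_1_eq by blast
qed

lemma beta2_til_cocycle:
  assumes "\<omega> \<in> Zdual sV br 2"
  shows "beta2_til \<omega> \<in> Zsym sV br 1"
proof -
  obtain W where \<omega>_eq: "\<omega> = cochain2 W" and W: "trilinear_form W" "\<And>a c. W a a c = 0"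
    and closed: "dual_d2 W = 0"
    using assms unfolding Zdual_2_eq by blast
  have "trilinear_form (\<lambda>x y z. W x y z + W x z y)"
    by (rule trilinear_form_add[OF W(1) trilinear_form_swap23[OF W(1)]])
  moreover have "sym_d1 (\<lambda>x y z. W x y z + W x z y) = 0"
    using closed by (simp add: fun_eq_iff sym_d1_symmetrization[OF W])
  ultimately show ?thesis
    unfolding Zsym_1_eq by (auto simp: \<omega>_eq beta2_til_cochain2 add.commute)
qed

lemma beta2_til_alpha_til_3:
  assumes "\<omega> \<in> Ztriv sV br 3"
  shows "beta2_til (alpha_til 3 \<omega>) = 0"
proof -
  obtain f where \<omega>_eq: "\<omega> = cochain3 f" and f: "alternating_trilinear f"
    using assms unfolding Ztriv_3_eq by blast
  have "(\<lambda>x y z. f x y z + f x z y) = 0"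
  proof (intro ext)
    fix x y z
    show "f x y z + f x z y = 0 x y z"
      using alternating_trilinear_antisym(2)[OF f, of x y z] by simp
  qed
  then show ?thesis
    by (simp add: \<omega>_eq alpha_til_cochain beta2_til_cochain2 cochain_eq_0_iff)
qed

lemma beta2_til_kernel:
  assumes \<omega>: "\<omega> \<in> Zdual sV br 2" and "beta2_til \<omega> \<in> Bsym sV br 1" and two: "(2::'k) \<noteq> 0"
  shows "\<exists>\<theta>\<in>Ztriv sV br 3. \<omega> - alpha_til 3 \<theta> \<in> Bdual sV br 2"
proof -
  obtain W where \<omega>_eq: "\<omega> = cochain2 W" and W: "trilinear_form W" "\<And>a c. W a a c = 0"
    "dual_d2 W = 0"
    using \<omega> unfolding Zdual_2_eq by blast
  obtain \<kappa> where \<kappa>: "\<kappa> \<in> sym2 sV"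
    and "(\<lambda>x y z. W x y z + W x z y) = (\<lambda>x. sym_act br x \<kappa>)"
    using assms(2) unfolding Bsym_1_eq by (auto simp: \<omega>_eq beta2_til_cochain2 cochain_eq_iff)
  then have sym_part: "W x y z + W x z y = sym_act br x \<kappa> y z" for x y z
    by (simp add: fun_eq_iff)
  define h :: 'k where "h = inverse 2"
  have hh: "h + h = 1"
    unfolding h_def by (rule half_add_half[OF two])
  define D where "D = dual_d1 (\<lambda>a b. h * \<kappa> a b)"
  define g where "g = (\<lambda>x y z. W x y z - D x y z)"
  have "cochain3 g \<in> Ztriv sV br 3"
    using alternating_closed_correction[OF W \<kappa> sym_part hh]
    unfolding Ztriv_3_eq g_def D_def by blast
  moreover have "W - g = D"
    by (simp add: fun_eq_iff g_def)
  then have "\<omega> - alpha_til 3 (cochain3 g) \<in> Bdual sV br 2"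
    using bilinear_form_scale[of \<kappa> h] \<kappa>
    by (auto simp: \<omega>_eq alpha_til_cochain cochain_diff Bdual_2_eq D_def sym2_iff)
  ultimately show ?thesis
    by blast
qed

lemma well_defined_alpha_til_2: "well_defined_linear (cscale (*)) (Btriv sV br 2) (Htriv sV br 2)
    (cscale dual_scale) (Bdual sV br 1) (Hdual sV br 1) (alpha_til 2)"
  unfolding cohomology_def
  by (rule module_hom.well_defined_linear_cosets[OF module_hom_alpha_til
        coboundaries_subspaces(1,2)])
    (use alpha_til_2_coboundary alpha_til_2_cocycle in blast)+

lemma well_defined_S_map: "well_defined_linear (cscale dual_scale) (Bdual sV br 1) (Hdual sV br 1)
    sym_scale {0} (Sinv sV br) S_map"
  unfolding cohomology_def
  by (rule module_hom.well_defined_linear_cosets[OF module_hom_S_map coboundaries_subspaces(2)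
        subspace_zero_sym_scale])
    (use S_map_coboundary S_map_cocycle in blast)+

lemma well_defined_Gamma:
  assumes "(2::'k) \<noteq> 0"
  shows "well_defined_linear sym_scale {0} (Sinv sV br)
    (cscale (*)) (Btriv sV br 3) (Htriv sV br 3) (Gamma br)"
  unfolding cohomology_def
  by (rule module_hom.well_defined_linear_cosets[OF module_hom_Gamma subspace_zero_sym_scale
        coboundaries_subspaces(1)])
    (use zero_mem_coboundaries(1) Gamma_cocycle[OF _ assms] in \<open>auto simp: Gamma_zero\<close>)

lemma well_defined_alpha_til_3: "well_defined_linear (cscale (*)) (Btriv sV br 3) (Htriv sV br 3)
    (cscale dual_scale) (Bdual sV br 2) (Hdual sV br 2) (alpha_til 3)"
  unfolding cohomology_def
  by (rule module_hom.well_defined_linear_cosets[OF module_hom_alpha_til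
        coboundaries_subspaces(1,2)])
    (use alpha_til_3_coboundary alpha_til_3_cocycle in blast)+

lemma well_defined_beta2_til:
  "well_defined_linear (cscale dual_scale) (Bdual sV br 2) (Hdual sV br 2)
    (cscale sym_scale) (Bsym sV br 1) (Hsym sV br 1) beta2_til"
  unfolding cohomology_def
  by (rule module_hom.well_defined_linear_cosets[OF module_hom_beta2_til
        coboundaries_subspaces(2,3)])
    (use beta2_til_coboundary beta2_til_cocycle in blast)+

lemma kernel_alpha_til_2_trivial:
  "{c \<in> Htriv sV br 2. qmap (alpha_til 2) (Bdual sV br 1) c = coset (Bdual sV br 1) 0}
    = {coset (Btriv sV br 2) 0}"
  unfolding cohomology_def
  by (rule module_hom.kernel_cosets_trivial[OF module_hom_alpha_til coboundaries_subspaces(1,2) _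
        zero_mem_cocycles[OF vector_space_sV coefficient_module_triv]])
    (use alpha_til_2_coboundary alpha_til_2_reflects_coboundaries in blast)+

lemma exact_at_Hdual_1:
  assumes "(2::'k) \<noteq> 0"
  shows "exact_at (Htriv sV br 2) (alpha_til 2) (Bdual sV br 1) (Hdual sV br 1) S_map {0}"
  unfolding cohomology_def
proof (rule exact_at_cosets[OF module_hom_alpha_til module_hom_S_map coboundaries_subspaces(1,2)
      subspace_zero_sym_scale])
  show "alpha_til 2 ` Btriv sV br 2 \<subseteq> Bdual sV br 1"
    using alpha_til_2_coboundary by blast
  show "S_map ` Bdual sV br 1 \<subseteq> {0}"
    using S_map_coboundary by blast
  show "alpha_til 2 \<omega> \<in> Zdual sV br 1 \<and> S_map (alpha_til 2 \<omega>) \<in> {0}" if "\<omega> \<in> Ztriv sV br 2" for \<omega>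
    using alpha_til_2_cocycle[OF that] S_map_alpha_til_2[OF that] by blast
  show "\<exists>\<omega>\<in>Ztriv sV br 2. \<eta> - alpha_til 2 \<omega> \<in> Bdual sV br 1"
    if "\<eta> \<in> Zdual sV br 1" and "S_map \<eta> \<in> {0}" for \<eta>
    using S_map_kernel[OF that(1) _ assms] that(2) by blast
qed

lemma exact_at_Sinv:
  assumes "(2::'k) \<noteq> 0"
  shows "exact_at (Hdual sV br 1) S_map {0} (Sinv sV br) (Gamma br) (Btriv sV br 3)"
  unfolding cohomology_def
proof (rule exact_at_cosets[OF module_hom_S_map module_hom_Gamma coboundaries_subspaces(2)
      subspace_zero_sym_scale coboundaries_subspaces(1)])
  show "S_map ` Bdual sV br 1 \<subseteq> {0}"
    using S_map_coboundary by blast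
  show "Gamma br ` {0} \<subseteq> Btriv sV br 3"
    using zero_mem_coboundaries(1) by (simp add: Gamma_zero)
  show "S_map \<eta> \<in> sym2_inv sV br \<and> Gamma br (S_map \<eta>) \<in> Btriv sV br 3"
    if "\<eta> \<in> Zdual sV br 1" for \<eta>
    using S_map_cocycle[OF that] Gamma_S_map[OF that] by blast
  show "\<exists>\<eta>\<in>Zdual sV br 1. \<kappa> - S_map \<eta> \<in> {0}"
    if "\<kappa> \<in> sym2_inv sV br" and "Gamma br \<kappa> \<in> Btriv sV br 3" for \<kappa>
    by (rule Gamma_kernel[OF that assms])
qed

lemma exact_at_Htriv_3:
  assumes "(2::'k) \<noteq> 0"
  shows "exact_at (Sinv sV br) (Gamma br) (Btriv sV br 3) (Htriv sV br 3)
    (alpha_til 3) (Bdual sV br 2)"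
  unfolding cohomology_def
proof (rule exact_at_cosets[OF module_hom_Gamma module_hom_alpha_til subspace_zero_sym_scale
      coboundaries_subspaces(1,2)])
  show "Gamma br ` {0} \<subseteq> Btriv sV br 3"
    using zero_mem_coboundaries(1) by (simp add: Gamma_zero)
  show "alpha_til 3 ` Btriv sV br 3 \<subseteq> Bdual sV br 2"
    using alpha_til_3_coboundary by blast
  show "Gamma br \<kappa> \<in> Ztriv sV br 3 \<and> alpha_til 3 (Gamma br \<kappa>) \<in> Bdual sV br 2"
    if "\<kappa> \<in> sym2_inv sV br" for \<kappa>
    using Gamma_cocycle[OF that assms] alpha_til_3_Gamma[OF that] by blast
  show "\<exists>\<kappa>\<in>sym2_inv sV br. \<omega> - Gamma br \<kappa> \<in> Btriv sV br 3"
    if "\<omega> \<in> Ztriv sV br 3" and "alpha_til 3 \<omega> \<in> Bdual sV br 2" for \<omega>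
    by (rule alpha_til_3_kernel[OF that assms])
qed

lemma exact_at_Hdual_2:
  assumes "(2::'k) \<noteq> 0"
  shows "exact_at (Htriv sV br 3) (alpha_til 3) (Bdual sV br 2) (Hdual sV br 2)
    beta2_til (Bsym sV br 1)"
  unfolding cohomology_def
proof (rule exact_at_cosets[OF module_hom_alpha_til module_hom_beta2_til coboundaries_subspaces])
  show "alpha_til 3 ` Btriv sV br 3 \<subseteq> Bdual sV br 2"
    using alpha_til_3_coboundary by blast
  show "beta2_til ` Bdual sV br 2 \<subseteq> Bsym sV br 1"
    using beta2_til_coboundary by blast
  show "alpha_til 3 \<omega> \<in> Zdual sV br 2 \<and> beta2_til (alpha_til 3 \<omega>) \<in> Bsym sV br 1"
    if "\<omega> \<in> Ztriv sV br 3" for \<omega>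
    using alpha_til_3_cocycle[OF that] beta2_til_alpha_til_3[OF that] zero_mem_coboundaries(3)
    by simp
  show "\<exists>\<theta>\<in>Ztriv sV br 3. \<omega> - alpha_til 3 \<theta> \<in> Bdual sV br 2"
    if "\<omega> \<in> Zdual sV br 2" and "beta2_til \<omega> \<in> Bsym sV br 1" for \<omega>
    by (rule beta2_til_kernel[OF that assms])
qed

end

theorem proposition7p2:
  fixes sV :: "'k::field \<Rightarrow> 'v::ab_group_add \<Rightarrow> 'v"
    and br :: "'v \<Rightarrow> 'v \<Rightarrow> 'v"
  assumes "lie_algebra sV br"
    and "(2::'k) \<noteq> 0"
  shows
    "well_defined_linear (cscale (*)) (Btriv sV br 2) (Htriv sV br 2)
        (cscale dual_scale) (Bdual sV br 1) (Hdual sV br 1) (alpha_til 2)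
   \<and> well_defined_linear (cscale dual_scale) (Bdual sV br 1) (Hdual sV br 1)
        sym_scale {0} (Sinv sV br) S_map
   \<and> well_defined_linear sym_scale {0} (Sinv sV br)
        (cscale (*)) (Btriv sV br 3) (Htriv sV br 3) (Gamma br)
   \<and> well_defined_linear (cscale (*)) (Btriv sV br 3) (Htriv sV br 3)
        (cscale dual_scale) (Bdual sV br 2) (Hdual sV br 2) (alpha_til 3)
   \<and> well_defined_linear (cscale dual_scale) (Bdual sV br 2) (Hdual sV br 2)
        (cscale sym_scale) (Bsym sV br 1) (Hsym sV br 1) beta2_til
   \<and> {c \<in> Htriv sV br 2. qmap (alpha_til 2) (Bdual sV br 1) c = coset (Bdual sV br 1) 0}
       = {coset (Btriv sV br 2) 0}
   \<and> exact_at (Htriv sV br 2) (alpha_til 2) (Bdual sV br 1) (Hdual sV br 1) S_map {0}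
   \<and> exact_at (Hdual sV br 1) S_map {0} (Sinv sV br) (Gamma br) (Btriv sV br 3)
   \<and> exact_at (Sinv sV br) (Gamma br) (Btriv sV br 3) (Htriv sV br 3)
        (alpha_til 3) (Bdual sV br 2)
   \<and> exact_at (Htriv sV br 3) (alpha_til 3) (Bdual sV br 2) (Hdual sV br 2)
        beta2_til (Bsym sV br 1)"
proof -
  interpret Lie_algebra sV br
    using assms(1) by (rule Lie_algebra.intro)
  show ?thesis
    using well_defined_alpha_til_2 well_defined_S_map well_defined_Gamma[OF assms(2)]
      well_defined_alpha_til_3 well_defined_beta2_til kernel_alpha_til_2_trivial
      exact_at_Hdual_1[OF assms(2)] exact_at_Sinv[OF assms(2)] exact_at_Htriv_3[OF assms(2)]
      exact_at_Hdual_2[OF assms(2)]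
    by blast
qed

end
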